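(* Let $\Sigma$ be an alphabet and $\delta\in(0,1)$ be a sufficiently small constant. Let $\mathcal{P}\subseteq\Sigma^*$ be a property of strings that is $\varepsilon$-testable in the standard model using $q(m,\varepsilon)$ queries on inputs of length $m$, where $q(m,\varepsilon)=\Omega(\frac1\varepsilon)$. Then, for all $r\in\mathbb{N}$ and $t\le\frac{\delta\cdot r}{[q(m,\frac\varepsilon2)\log q(m,\frac\varepsilon2)]^2}$, the property $\mathcal{P}^r$ is $t$-online-corruption-resiliently $\varepsilon$-testable using $\widetilde{O}(q(m,\frac\varepsilon2))$ queries on inputs of length $n=m\cdot r$.
   Context: For $r\in\mathbb{N}$ and a string $x$, $x^r$ is the concatenation of $r$ copies of $x$, and $\mathcal{P}^r=\{x^r:x\in\mathcal{P}\}$. A property is a set $\mathcal{P}=\bigcup_n\mathcal{P}_n$ where $\mathcal{P}_n$ consists of strings of length $n$ over $\Sigma$. The relative Hamming distance of $x,y\in\Sigma^n$ is $\delta_H(x,y)=\Pr_{i\sim[n]}[x_i\neq y_i]$; $x$ is $\varepsilon$-far from $\mathcal{P}$ if $\delta_H(x,y)\ge\varepsilon$ for all $y\in\mathcal{P}_n$. An $\varepsilon$-tester in the standard model, given $n$ and query access to $x\in\Sigma^n$, accepts with probability $\ge 2/3$ if $x\in\mathcal{P}$ and rejects with probability $\ge 2/3$ if $x$ is $\varepsilon$-far from $\mathcal{P}$. In the $t$-online-corruption model, the input is accessed through an adversarial oracle which initially answers query $i$ with $x_i$; after answering each query it may replace the values at up to $t$ indices by arbitrary symbols of $\Sigma$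 (used for future answers), with choices depending on the input, past queries and the algorithm's code but not on future coin tosses; a $t$-online-corruption-resilient $\varepsilon$-tester satisfies the tester guarantee (with respect to the original input) against every such oracle. $\widetilde{O}$ hides polylogarithmic factors. *)

theory Defs
  imports "HOL-Probability.Probability"
begin

text \<open>A deterministic adaptive query strategy: given the answers received so far
  (in order), it either asks the next query (Inl i, 0-based index) or halts with
  a verdict (Inr True = accept, Inr False = reject). A randomized algorithm is a
  probability distribution over such strategies (coins drawn up front).\<close>
type_synonym 'a strategy = "'a list \<Rightarrow> nat + bool"

definition rep_prop :: "nat \<Rightarrow> 'a list set \<Rightarrow> 'a list set" where
  "rep_prop r P = (\<lambda>x. concat (replicate r x)) ` P"

definition hdist :: "'a list \<Rightarrow> 'a list \<Rightarrow> real" where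
  "hdist x y = real (card {i. i < length x \<and> x ! i \<noteq> y ! i}) / real (length x)"

definition far :: "real \<Rightarrow> 'a list set \<Rightarrow> 'a list \<Rightarrow> bool" where
  "far \<epsilon> P x \<longleftrightarrow> (\<forall>y\<in>P. length y = length x \<longrightarrow> hdist x y \<ge> \<epsilon>)"

text \<open>Run of a strategy D with query budget k on inputs of length n, against an
  oracle orc: orc qs is the (current) string after the queries qs have been answered. Exceeding the budget or an
  out-of-range query yields None (neither accept nor reject).\<close>
fun run :: "nat \<Rightarrow> nat \<Rightarrow> 'a strategy \<Rightarrow> (nat list \<Rightarrow> 'a list) \<Rightarrow> nat list \<Rightarrow> 'a list
            \<Rightarrow> bool option" where
  "run 0 n D orc qs as = (case D as of Inr b \<Rightarrow> Some b | Inl _ \<Rightarrow> None)"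
| "run (Suc k) n D orc qs as = (case D as of Inr b \<Rightarrow> Some b
     | Inl i \<Rightarrow> (if n \<le> i then None else run k n D orc (qs @ [i]) (as @ [orc qs ! i])))"

text \<open>t-online-corruption oracles for input x: initially x; after each query the
  adversary may change at most t positions. Its choices depend only on the input
  and the past queries (and, since it is universally quantified after the algorithm,
  on the algorithm), not on the algorithm's coins.\<close>
definition oc_oracle :: "nat \<Rightarrow> 'a list \<Rightarrow> (nat list \<Rightarrow> 'a list) \<Rightarrow> bool" where
  "oc_oracle t x orc \<longleftrightarrow> orc [] = x \<and> (\<forall>qs. length (orc qs) = length x) \<and>
     (\<forall>qs i. card {j. j < length x \<and> orc (qs @ [i]) ! j \<noteq> orc qs ! j} \<le> t)"

definition std_tester :: "'a list set \<Rightarrow> real \<Rightarrow> nat \<Rightarrow> nat \<Rightarrow> 'a strategy pmf \<Rightarrow> bool" where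
  "std_tester P \<epsilon> n Q T \<longleftrightarrow> (\<forall>x. length x = n \<longrightarrow>
     (x \<in> P \<longrightarrow> measure_pmf.prob T {D. run Q n D (\<lambda>_. x) [] [] = Some True} \<ge> 2/3) \<and>
     (far \<epsilon> P x \<longrightarrow> measure_pmf.prob T {D. run Q n D (\<lambda>_. x) [] [] = Some False} \<ge> 2/3))"

definition oc_tester :: "'a list set \<Rightarrow> real \<Rightarrow> nat \<Rightarrow> nat \<Rightarrow> nat \<Rightarrow> 'a strategy pmf \<Rightarrow> bool" where
  "oc_tester P \<epsilon> t n Q T \<longleftrightarrow> (\<forall>x orc. length x = n \<longrightarrow> oc_oracle t x orc \<longrightarrow>
     (x \<in> P \<longrightarrow> measure_pmf.prob T {D. run Q n D orc [] [] = Some True} \<ge> 2/3) \<and>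
     (far \<epsilon> P x \<longrightarrow> measure_pmf.prob T {D. run Q n D orc [] [] = Some False} \<ge> 2/3))"

end

theory Submission
  imports Defs
begin

text \<open>The tester for \<open>P\<^sup>r\<close> on \<open>x\<close> of length \<open>m r\<close> first compares, \<open>s = O(1/\<epsilon>)\<close> times, the
  symbols of two random blocks at a random offset, and then runs the majority of three runs of
  the standard \<open>\<epsilon>/2\<close>-tester for \<open>P\<close> on the string \<open>z\<^sub>\<beta>\<close> whose \<open>v\<close>-th symbol is read from an
  independent uniformly random block \<open>\<beta> v\<close>. Repeated queries to the same offset are answered from
  a cache, so every query of the whole tester lands in a fresh uniformly random block. Hence its
  \<open>l\<close>-th query hits one of the at most \<open>l t\<close> positions corrupted so far with probability at most
  \<open>l t / r\<close>, and with \<open>K = O(q)\<close> queries and \<open>K\<^sup>2 t \<le> r/54\<close> the run coincides with the uncorrupted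
  one except with probability \<open>1/54\<close>. On the uncorrupted input, a member \<open>p\<^sup>r\<close> of \<open>P\<^sup>r\<close> passes the
  consistency checks and has \<open>z\<^sub>\<beta> = p\<close>. If \<open>x\<close> is \<open>\<epsilon>\<close>-far from \<open>P\<^sup>r\<close>, then either blocks
  disagree often and the checks reject, or by Markov's inequality \<open>z\<^sub>\<beta>\<^sup>r\<close> is usually
  \<open>\<epsilon>/2\<close>-close to \<open>x\<close>, so that \<open>z\<^sub>\<beta>\<close> is \<open>\<epsilon>/2\<close>-far from \<open>P\<close>.\<close>

section \<open>Probability bounds for discrete distributions\<close>

lemma prob_bind_le:
  assumes "\<And>x. x \<in> set_pmf M \<Longrightarrow> measure_pmf.prob (f x) A \<le> c"
  shows "measure_pmf.prob (bind_pmf M f) A \<le> c"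
proof -
  obtain x where x: "x \<in> set_pmf M" using set_pmf_not_empty[of M] by blast
  have c0: "0 \<le> c" using assms[OF x] measure_nonneg order_trans by blast
  have "emeasure (bind_pmf M f) A = (\<integral>\<^sup>+x. emeasure (f x) A \<partial>M)" by simp
  also have "\<dots> \<le> (\<integral>\<^sup>+x. ennreal c \<partial>M)"
    by (rule nn_integral_mono_AE, rule AE_pmfI)
       (use assms in \<open>simp add: measure_pmf.emeasure_eq_measure ennreal_leI\<close>)
  also have "\<dots> = ennreal c" by simp
  finally have "ennreal (measure_pmf.prob (bind_pmf M f) A) \<le> ennreal c"
    by (simp add: measure_pmf.emeasure_eq_measure)
  thus ?thesis using c0 by simp
qed

lemma prob_pmf_compl: "measure_pmf.prob M (- A) = 1 - measure_pmf.prob M A"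
  using measure_pmf.prob_compl[of A M] by (simp add: Compl_eq_Diff_UNIV)

lemma prob_pair_le:
  assumes "\<And>a. a \<in> set_pmf M \<Longrightarrow> measure_pmf.prob N {b. (a, b) \<in> E} \<le> c"
  shows "measure_pmf.prob (pair_pmf M N) E \<le> c"
  unfolding pair_pmf_def
  by (rule prob_bind_le) (use assms in \<open>simp add: map_pmf_def[symmetric] vimage_def\<close>)

lemma prob_mono_on_support:
  assumes "\<And>w. w \<in> set_pmf M \<Longrightarrow> w \<in> Y \<Longrightarrow> w \<in> X"
  shows "measure_pmf.prob M Y \<le> measure_pmf.prob M X"
proof -
  have "measure_pmf.prob M Y = measure_pmf.prob M (Y \<inter> set_pmf M)"
    by (simp add: measure_Int_set_pmf)
  also have "\<dots> \<le> measure_pmf.prob M X"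
    by (rule measure_pmf.finite_measure_mono) (use assms in auto)
  finally show ?thesis .
qed

lemma prob_pair_Times:
  "measure_pmf.prob (pair_pmf M N) (A \<times> B) = measure_pmf.prob M A * measure_pmf.prob N B"
proof -
  have "measure_pmf.prob (pair_pmf M N) (A \<times> B) =
      measure_pmf.prob (pair_pmf M N) ((A \<times> B) \<inter> set_pmf (pair_pmf M N))"
    using measure_Int_set_pmf[of "pair_pmf M N" "A \<times> B"] by simp
  also have "(A \<times> B) \<inter> set_pmf (pair_pmf M N) = (A \<inter> set_pmf M) \<times> (B \<inter> set_pmf N)" by auto
  also have "measure_pmf.prob (pair_pmf M N) \<dots> =
      measure_pmf.prob M (A \<inter> set_pmf M) * measure_pmf.prob N (B \<inter> set_pmf N)"
    by (rule measure_pmf_prob_product) (auto intro: countable_subset[OF _ countable_set_pmf])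
  finally show ?thesis by (simp add: measure_Int_set_pmf)
qed

lemma prob_pair_snd: "measure_pmf.prob (pair_pmf M N) {ab. snd ab \<in> B} = measure_pmf.prob N B"
proof -
  have "measure_pmf.prob (pair_pmf M N) {ab. snd ab \<in> B} =
      measure_pmf.prob (map_pmf snd (pair_pmf M N)) B"
    by (simp add: vimage_def)
  thus ?thesis by (simp add: map_snd_pair_pmf)
qed

lemma prob_pair_le_add:
  assumes "\<And>a. a \<in> set_pmf M \<Longrightarrow> a \<notin> X \<Longrightarrow> measure_pmf.prob N {b. (a, b) \<in> E} \<le> c"
    and "0 \<le> c"
  shows "measure_pmf.prob (pair_pmf M N) E \<le> measure_pmf.prob M X + c"
proof -
  let ?Y = "E \<inter> {ab. fst ab \<notin> X}"
  have "measure_pmf.prob (pair_pmf M N) E \<le> measure_pmf.prob (pair_pmf M N) ((X \<times> UNIV) \<union> ?Y)"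
    by (intro measure_pmf.finite_measure_mono) auto
  also have "\<dots> \<le> measure_pmf.prob (pair_pmf M N) (X \<times> UNIV) + measure_pmf.prob (pair_pmf M N) ?Y"
    by (rule measure_Un_le) simp_all
  also have "measure_pmf.prob (pair_pmf M N) (X \<times> UNIV) = measure_pmf.prob M X"
    by (simp add: prob_pair_Times)
  also have "measure_pmf.prob (pair_pmf M N) ?Y \<le> c"
  proof (rule prob_pair_le)
    fix a assume a: "a \<in> set_pmf M"
    show "measure_pmf.prob N {b. (a, b) \<in> ?Y} \<le> c"
    proof (cases "a \<in> X")
      case False
      have "measure_pmf.prob N {b. (a, b) \<in> ?Y} \<le> measure_pmf.prob N {b. (a, b) \<in> E}"
        by (intro measure_pmf.finite_measure_mono) auto
      also have "\<dots> \<le> c" using assms(1)[OF a False] .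
      finally show ?thesis .
    qed (use assms(2) in simp)
  qed
  finally show ?thesis by simp
qed

lemma map_pair_pmf_eq_bind_fst:
  "map_pmf g (pair_pmf M N) = bind_pmf M (\<lambda>a. map_pmf (\<lambda>b. g (a, b)) N)"
  by (simp add: pair_pmf_def map_bind_pmf map_pmf_def bind_assoc_pmf bind_return_pmf)

lemma map_pair_pmf_eq_bind_snd:
  "map_pmf g (pair_pmf M N) = bind_pmf N (\<lambda>b. map_pmf (\<lambda>a. g (a, b)) M)"
  by (simp add: pair_commute_pmf[of M N] pair_pmf_def map_bind_pmf bind_map_pmf map_pmf_def
      bind_assoc_pmf bind_return_pmf bind_commute_pmf[of M])

lemma prob_Pi_pmf_all:
  "measure_pmf.prob (Pi_pmf {..<s} d (\<lambda>_. M)) {w. \<forall>l<s. w l \<in> G} = measure_pmf.prob M G ^ s"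
proof -
  have "{w. \<forall>l<s. w l \<in> G} = Pi {..<s} (\<lambda>_. G)" by (auto simp: Pi_def)
  thus ?thesis by (simp add: measure_Pi_pmf_Pi)
qed

abbreviation unif :: "nat \<Rightarrow> nat pmf" where "unif r \<equiv> pmf_of_set {..<r}"

lemma set_pmf_unif: "0 < r \<Longrightarrow> set_pmf (unif r) = {..<r}"
  by (subst set_pmf_of_set) auto

lemma pmf_unif: "0 < r \<Longrightarrow> c < r \<Longrightarrow> pmf (unif r) c = 1 / real r"
  by (subst pmf_of_set) auto

lemma Pi_unif_support:
  assumes "\<beta> \<in> set_pmf (Pi_pmf A 0 (\<lambda>_. unif r))" "finite A" "0 < r"
  shows "\<beta> v < r"
  using set_Pi_pmf_subset'[OF assms(2), of 0 "\<lambda>_. unif r"] assms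
  by (cases "v \<in> A") (auto simp: PiE_dflt_def set_pmf_unif)

lemma prob_unif_affine_mem_le:
  assumes "finite S" "0 < r" "0 < m"
  shows "measure_pmf.prob (unif r) {c. c * m + i \<in> S} \<le> real (card S) / real r"
proof -
  let ?C = "{..<r} \<inter> {c. c * m + i \<in> S}"
  have "measure_pmf.prob (unif r) {c. c * m + i \<in> S} = card ?C / card {..<r}"
    using assms by (subst measure_pmf_of_set) auto
  also have "card ?C \<le> card S"
    by (rule card_inj_on_le[where f="\<lambda>c. c * m + i"]) (use assms in \<open>auto simp: inj_on_def\<close>)
  hence "real (card ?C) / card {..<r} \<le> real (card S) / real r"
    by (simp add: divide_right_mono)
  finally show ?thesis .
qed

definition maj3 :: "bool \<Rightarrow> bool \<Rightarrow> bool \<Rightarrow> bool" where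
  "maj3 a b c \<longleftrightarrow> (a \<and> b) \<or> (a \<and> c) \<or> (b \<and> c)"

lemma maj3_poly_ge:
  fixes p :: real
  assumes "2/3 \<le> p" "p \<le> 1"
  shows "20/27 \<le> p * (p * p) + p * (p * (1 - p)) + p * ((1 - p) * p) + (1 - p) * (p * p)"
proof -
  have "2 * p * p \<le> 2 * p" using assms by (simp add: mult_left_le)
  hence "0 \<le> p - 2/3" "0 \<le> 10/9 + 5 * p / 3 - 2 * p * p" using assms by linarith+
  hence "0 \<le> (p - 2/3) * (10/9 + 5 * p / 3 - 2 * p * p)" by simp
  moreover have "p * (p * p) + p * (p * (1 - p)) + p * ((1 - p) * p) + (1 - p) * (p * p) - 20/27
     = (p - 2/3) * (10/9 + 5 * p / 3 - 2 * p * p)" by (simp add: field_simps)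
  ultimately show ?thesis by linarith
qed

lemma prob_maj3_ge:
  assumes "measure_pmf.prob M E \<ge> 2/3"
  shows "measure_pmf.prob (pair_pmf M (pair_pmf M M)) {(a, b, c). maj3 (a \<in> E) (b \<in> E) (c \<in> E)}
    \<ge> 20/27"
proof -
  define B where "B = map_pmf (\<lambda>a. a \<in> E) M"
  define p where "p = measure_pmf.prob M E"
  have pT: "pmf B True = p" unfolding B_def p_def by (simp add: pmf_map vimage_def)
  have pF: "pmf B False = 1 - p" unfolding B_def p_def
    by (simp add: pmf_map vimage_def prob_pmf_compl[symmetric] Compl_eq)
  define g where "g = (\<lambda>(a::'a, b::'a, c::'a). (a \<in> E, b \<in> E, c \<in> E))"
  have "map_pmf g (pair_pmf M (pair_pmf M M)) =
      map_pmf (\<lambda>(a, bc). (a \<in> E, (\<lambda>(b, c). (b \<in> E, c \<in> E)) bc)) (pair_pmf M (pair_pmf M M))"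
    by (simp add: case_prod_unfold g_def)
  also have "\<dots> = pair_pmf B (pair_pmf B B)"
    unfolding B_def by (simp only: map_pair)
  finally have map_g: "map_pmf g (pair_pmf M (pair_pmf M M)) = pair_pmf B (pair_pmf B B)" .
  have "{(a, b, c). maj3 (a \<in> E) (b \<in> E) (c \<in> E)} = g -` {(a, b, c). maj3 a b c}"
    by (auto simp: g_def)
  hence "measure_pmf.prob (pair_pmf M (pair_pmf M M)) {(a, b, c). maj3 (a \<in> E) (b \<in> E) (c \<in> E)} =
      measure_pmf.prob (pair_pmf B (pair_pmf B B)) {(a, b, c). maj3 a b c}"
    by (simp only: measure_map_pmf[symmetric] map_g)
  also have "{(a, b, c). maj3 a b c} =
      {(True, True, True), (True, True, False), (True, False, True), (False, True, True)}"
    by (auto simp: maj3_def)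
  also have "measure_pmf.prob (pair_pmf B (pair_pmf B B)) \<dots> =
      p * (p * p) + p * (p * (1 - p)) + p * ((1 - p) * p) + (1 - p) * (p * p)"
    by (simp add: measure_measure_pmf_finite pmf_pair pT pF)
  also have "\<dots> \<ge> 20/27"
    using assms measure_pmf.prob_le_1[of M E] unfolding p_def[symmetric]
    by (intro maj3_poly_ge) auto
  finally show ?thesis by simp
qed

lemma one_minus_power_le_inverse:
  fixes D :: real
  assumes "0 \<le> D" "D \<le> 1"
  shows "(1 - D) ^ s \<le> 1 / (1 + real s * D)"
proof -
  have "(1 - D) ^ s * (1 + D) ^ s = (1 - D * D) ^ s"
    by (simp add: power_mult_distrib[symmetric] algebra_simps)
  also have "\<dots> \<le> 1" using assms by (intro power_le_one) (auto simp: mult_le_one)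
  finally have "(1 - D) ^ s * (1 + D) ^ s \<le> 1" .
  moreover have "1 + real s * D \<le> (1 + D) ^ s" using assms by (intro Bernoulli_inequality) simp
  moreover have "0 \<le> (1 - D) ^ s" "0 < 1 + real s * D" using assms by (simp_all add: add_pos_nonneg)
  ultimately have "(1 - D) ^ s * (1 + real s * D) \<le> 1"
    by (meson order_trans mult_left_mono)
  thus ?thesis using \<open>0 < 1 + real s * D\<close> by (simp add: field_simps)
qed

section \<open>Runs of a strategy on a fixed string\<close>

fun run_on :: "nat \<Rightarrow> nat \<Rightarrow> 'a strategy \<Rightarrow> 'a list \<Rightarrow> 'a list \<Rightarrow> bool option" where
  "run_on 0 n D y as = (case D as of Inr b \<Rightarrow> Some b | Inl _ \<Rightarrow> None)"
| "run_on (Suc k) n D y as = (case D as of Inr b \<Rightarrow> Some b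
     | Inl i \<Rightarrow> (if n \<le> i then None else run_on k n D y (as @ [y ! i])))"

fun queries_on :: "nat \<Rightarrow> nat \<Rightarrow> 'a strategy \<Rightarrow> 'a list \<Rightarrow> 'a list \<Rightarrow> nat list" where
  "queries_on 0 n D y as = []"
| "queries_on (Suc k) n D y as = (case D as of Inr b \<Rightarrow> []
     | Inl i \<Rightarrow> (if n \<le> i then [] else i # queries_on k n D y (as @ [y ! i])))"

lemma run_const_oracle: "run k n D (\<lambda>_. y) qs as = run_on k n D y as"
  by (induction k arbitrary: qs as) (auto split: sum.splits)

lemma run_on_shift:
  assumes "\<And>more. D1 (pre @ more) = D2 (pre' @ more)"
  shows "run_on k n D1 y (pre @ as) = run_on k n D2 y (pre' @ as)"
  using assms
proof (induction k arbitrary: as)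
  case (Suc k)
  show ?case using Suc.prems Suc.IH[of "as @ [y ! _]"] by (simp split: sum.splits)
qed (simp split: sum.splits)

lemma queries_on_shift:
  assumes "\<And>more. D1 (pre @ more) = D2 (pre' @ more)"
  shows "queries_on k n D1 y (pre @ as) = queries_on k n D2 y (pre' @ as)"
  using assms
proof (induction k arbitrary: as)
  case (Suc k)
  show ?case using Suc.prems Suc.IH[of "as @ [y ! _]"] by (simp split: sum.splits)
qed simp

lemma run_on_shift_Nil:
  assumes "\<And>more. D1 (pre @ more) = D2 more"
  shows "run_on k n D1 y pre = run_on k n D2 y []"
  using run_on_shift[of D1 pre D2 "[]" k n y "[]"] assms by simp

lemma queries_on_shift_Nil:
  assumes "\<And>more. D1 (pre @ more) = D2 more"
  shows "queries_on k n D1 y pre = queries_on k n D2 y []"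
  using queries_on_shift[of D1 pre D2 "[]" k n y "[]"] assms by simp

lemma run_on_cong:
  assumes "\<And>more. D1 (as @ more) = D2 (as @ more)"
  shows "run_on k n D1 y as = run_on k n D2 y as"
  using run_on_shift[of D1 as D2 as k n y "[]"] assms by simp

lemma queries_on_cong:
  assumes "\<And>more. D1 (as @ more) = D2 (as @ more)"
  shows "queries_on k n D1 y as = queries_on k n D2 y as"
  using queries_on_shift[of D1 as D2 as k n y "[]"] assms by simp

lemma run_on_mono:
  "run_on k n D y as = Some b \<Longrightarrow> k \<le> k' \<Longrightarrow> run_on k' n D y as = Some b"
proof (induction k arbitrary: k' as)
  case 0 then show ?case by (cases k') (auto split: sum.splits)
next
  case (Suc k)
  then obtain k'' where k': "k' = Suc k''" by (cases k') auto
  show ?case using Suc by (auto simp: k' split: sum.splits if_splits)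
qed

lemma length_queries_on: "length (queries_on k n D y as) \<le> k"
  by (induction k arbitrary: as) (auto split: sum.splits)

lemma queries_on_less: "j \<in> set (queries_on k n D y as) \<Longrightarrow> j < n"
  by (induction k arbitrary: as) (auto split: sum.splits if_splits)

definition reads_corrupted :: "(nat list \<Rightarrow> 'a list) \<Rightarrow> 'a list \<Rightarrow> nat list \<Rightarrow> bool" where
  "reads_corrupted orc x L \<longleftrightarrow> (\<exists>l<length L. orc (take l L) ! (L ! l) \<noteq> x ! (L ! l))"

lemma run_eq_run_on_if_not_reads_corrupted:
  assumes "\<not> reads_corrupted (\<lambda>ps. orc (qs @ ps)) x (queries_on k n D x as)"
  shows "run k n D orc qs as = run_on k n D x as"
  using assms
proof (induction k arbitrary: qs as)
  case (Suc k)
  show ?case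
  proof (cases "D as")
    case (Inl i)
    show ?thesis
    proof (cases "n \<le> i")
      case False
      let ?L = "queries_on k n D x (as @ [x ! i])"
      have L: "queries_on (Suc k) n D x as = i # ?L" using Inl False by simp
      have first: "orc qs ! i = x ! i"
        using Suc.prems L by (force simp: reads_corrupted_def)
      have "\<not> reads_corrupted (\<lambda>ps. orc ((qs @ [i]) @ ps)) x ?L"
      proof
        assume "reads_corrupted (\<lambda>ps. orc ((qs @ [i]) @ ps)) x ?L"
        then obtain l where "l < length ?L" "orc (qs @ i # take l ?L) ! (?L ! l) \<noteq> x ! (?L ! l)"
          by (auto simp: reads_corrupted_def)
        thus False using Suc.prems L by (auto simp: reads_corrupted_def intro!: exI[of _ "Suc l"])
      qed
      then show ?thesis using Inl False first Suc.IH by simp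
    qed (use Inl in simp)
  qed simp
qed (simp split: sum.splits)

section \<open>Strategies whose queries are spread out\<close>

lemma oc_oracle_card_diff:
  assumes "oc_oracle t x orc"
  shows "card {j. j < length x \<and> orc ps ! j \<noteq> x ! j} \<le> length ps * t"
proof (induction ps rule: rev_induct)
  case Nil
  then show ?case using assms by (simp add: oc_oracle_def)
next
  case (snoc i ps)
  let ?A = "{j. j < length x \<and> orc ps ! j \<noteq> x ! j}"
  let ?B = "{j. j < length x \<and> orc (ps @ [i]) ! j \<noteq> orc ps ! j}"
  have "card {j. j < length x \<and> orc (ps @ [i]) ! j \<noteq> x ! j} \<le> card (?A \<union> ?B)"
    by (intro card_mono) auto
  also have "\<dots> \<le> card ?A + card ?B" by (rule card_Un_le)
  also have "card ?B \<le> t" using assms by (simp add: oc_oracle_def)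
  finally show ?case using snoc by simp
qed

text \<open>A distribution of query sequences is \<open>r\<close>-spread if, for every rule \<open>F\<close> that chooses a set
  of at most \<open>N\<close> positions from the previous queries, the \<open>l\<close>-th query falls into the chosen set
  with probability at most \<open>N / r\<close>. An online adversary is such a rule.\<close>

definition spread :: "nat \<Rightarrow> nat list pmf \<Rightarrow> bool" where
  "spread r \<mu> \<longleftrightarrow> (\<forall>l F N. (\<forall>ps. finite (F ps) \<and> card (F ps) \<le> N) \<longrightarrow>
     measure_pmf.prob \<mu> {L. l < length L \<and> L ! l \<in> F (take l L)} \<le> real N / real r)"

lemma spreadI:
  assumes "\<And>l F N. (\<And>ps. finite (F ps) \<and> card (F ps) \<le> N) \<Longrightarrow>
     measure_pmf.prob \<mu> {L. l < length L \<and> L ! l \<in> F (take l L)} \<le> real N / real r"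
  shows "spread r \<mu>"
  using assms unfolding spread_def by blast

lemma spreadD:
  assumes "spread r \<mu>" "\<And>ps. finite (F ps) \<and> card (F ps) \<le> N"
  shows "measure_pmf.prob \<mu> {L. l < length L \<and> L ! l \<in> F (take l L)} \<le> real N / real r"
  using assms unfolding spread_def by blast

lemma spread_bind:
  assumes "\<And>x. x \<in> set_pmf M \<Longrightarrow> spread r (f x)"
  shows "spread r (bind_pmf M f)"
  by (rule spreadI, rule prob_bind_le) (use assms spreadD in blast)

lemma spread_map_Nil:
  assumes "\<And>a. g a = []"
  shows "spread r (map_pmf g M)"
  by (rule spreadI) (simp add: assms)

lemma spread_unif_singleton:
  assumes "0 < r" "0 < m"
  shows "spread r (map_pmf (\<lambda>c. [c * m + i]) (unif r))"
proof (rule spreadI)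
  fix l N :: nat and F :: "nat list \<Rightarrow> nat set"
  assume F: "\<And>ps. finite (F ps) \<and> card (F ps) \<le> N"
  show "measure_pmf.prob (map_pmf (\<lambda>c. [c * m + i]) (unif r)) {L. l < length L \<and> L ! l \<in> F (take l L)}
    \<le> real N / real r"
  proof (cases l)
    case 0
    have "measure_pmf.prob (map_pmf (\<lambda>c. [c * m + i]) (unif r)) {L. l < length L \<and> L ! l \<in> F (take l L)}
        = measure_pmf.prob (unif r) {c. c * m + i \<in> F []}" using 0 by (simp add: vimage_def)
    also have "\<dots> \<le> real (card (F [])) / real r"
      by (rule prob_unif_affine_mem_le) (use F assms in auto)
    also have "\<dots> \<le> real N / real r" using F[of "[]"] by (simp add: divide_right_mono)
    finally show ?thesis .
  qed (simp add: vimage_def)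
qed

lemma spread_append:
  assumes len: "\<And>a. length (pre a) = ll"
    and spread_pre: "spread r (map_pmf pre M1)"
    and spread_rest: "\<And>a. a \<in> set_pmf M1 \<Longrightarrow> spread r (map_pmf (rest a) M2)"
  shows "spread r (map_pmf (\<lambda>(a, b). pre a @ rest a b) (pair_pmf M1 M2))"
proof (rule spreadI)
  fix l N :: nat and F :: "nat list \<Rightarrow> nat set"
  assume F: "\<And>ps. finite (F ps) \<and> card (F ps) \<le> N"
  let ?E = "{L. l < length L \<and> L ! l \<in> F (take l L)}"
  have "measure_pmf.prob (map_pmf (\<lambda>(a, b). pre a @ rest a b) (pair_pmf M1 M2)) ?E =
      measure_pmf.prob (pair_pmf M1 M2) {(a, b). pre a @ rest a b \<in> ?E}"
    by (simp add: vimage_def case_prod_unfold)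
  also have "\<dots> \<le> real N / real r"
  proof (cases "l < ll")
    case True
    have "{(a, b). pre a @ rest a b \<in> ?E} = {ab. fst ab \<in> pre -` ?E}"
      using True len by (auto simp: nth_append)
    hence "measure_pmf.prob (pair_pmf M1 M2) {(a, b). pre a @ rest a b \<in> ?E} =
        measure_pmf.prob (map_pmf fst (pair_pmf M1 M2)) (pre -` ?E)"
      by (simp add: vimage_def)
    also have "\<dots> = measure_pmf.prob (map_pmf pre M1) ?E" by (simp add: map_fst_pair_pmf)
    also have "\<dots> \<le> real N / real r" by (rule spreadD[OF spread_pre F])
    finally show ?thesis .
  next
    case False
    show ?thesis
    proof (rule prob_pair_le)
      fix a assume a: "a \<in> set_pmf M1"
      let ?F' = "\<lambda>ps. F (pre a @ ps)"
      have "{b. (a, b) \<in> {(a, b). pre a @ rest a b \<in> ?E}} =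
          rest a -` {L. l - ll < length L \<and> L ! (l - ll) \<in> ?F' (take (l - ll) L)}"
        using False len[of a] by (auto simp: nth_append)
      moreover have "measure_pmf.prob (map_pmf (rest a) M2)
          {L. l - ll < length L \<and> L ! (l - ll) \<in> ?F' (take (l - ll) L)} \<le> real N / real r"
        by (rule spreadD[OF spread_rest[OF a]]) (use F in simp)
      ultimately show "measure_pmf.prob M2 {b. (a, b) \<in> {(a, b). pre a @ rest a b \<in> ?E}}
          \<le> real N / real r"
        by simp
    qed
  qed
  finally show "measure_pmf.prob (map_pmf (\<lambda>(a, b). pre a @ rest a b) (pair_pmf M1 M2)) ?E
      \<le> real N / real r" .
qed

text \<open>Before the \<open>l\<close>-th query at most \<open>l t\<close> positions are corrupted, so a union bound over the
  \<open>K\<close> queries gives \<open>K \<cdot> K t / r\<close>.\<close>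

lemma prob_reads_corrupted_le:
  assumes oc: "oc_oracle t x orc" and r: "0 < r" and sp: "spread r \<mu>"
    and queries: "\<And>L. L \<in> set_pmf \<mu> \<Longrightarrow> length L \<le> K \<and> set L \<subseteq> {..<length x}"
  shows "measure_pmf.prob \<mu> {L. reads_corrupted orc x L} \<le> real (K * K * t) / real r"
proof -
  define F where "F l ps = (if length ps = l then {j. j < length x \<and> orc ps ! j \<noteq> x ! j} else {})"
    for l and ps :: "nat list"
  define E where "E l = {L. l < length L \<and> L ! l \<in> F l (take l L)}" for l
  have "measure_pmf.prob \<mu> {L. reads_corrupted orc x L} \<le> measure_pmf.prob \<mu> (\<Union>l\<in>{..<K}. E l)"
  proof (rule prob_mono_on_support)
    fix L assume L: "L \<in> set_pmf \<mu>" "L \<in> {L. reads_corrupted orc x L}"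
    then obtain l where l: "l < length L" "orc (take l L) ! (L ! l) \<noteq> x ! (L ! l)"
      by (auto simp: reads_corrupted_def)
    have "l < K" using queries[OF L(1)] l(1) by simp
    moreover have "L ! l < length x" using queries[OF L(1)] l(1) nth_mem by blast
    ultimately show "L \<in> (\<Union>l\<in>{..<K}. E l)" using l by (auto simp: E_def F_def)
  qed
  also have "\<dots> \<le> (\<Sum>l<K. measure_pmf.prob \<mu> (E l))"
    by (rule measure_pmf.finite_measure_subadditive_finite) auto
  also have "\<dots> \<le> (\<Sum>l<K. real (K * t) / real r)"
  proof (rule sum_mono)
    fix l assume l: "l \<in> {..<K}"
    have "card (F l ps) \<le> K * t" for ps
    proof -
      have "card (F l ps) \<le> l * t" using oc_oracle_card_diff[OF oc, of ps] by (auto simp: F_def)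
      also have "\<dots> \<le> K * t" using l by simp
      finally show ?thesis .
    qed
    then show "measure_pmf.prob \<mu> (E l) \<le> real (K * t) / real r"
      unfolding E_def by (intro spreadD[OF sp]) (simp add: F_def)
  qed
  also have "\<dots> = real (K * K * t) / real r" by simp
  finally show ?thesis .
qed

lemma prob_oc_run_ge:
  fixes T :: "'a strategy pmf"
  assumes oc: "oc_oracle t x orc" and lx: "length x = n" and r: "0 < r"
    and sp: "spread r (map_pmf (\<lambda>S. queries_on K n S x []) T)"
  shows "measure_pmf.prob T {S. run K n S orc [] [] = Some v} \<ge>
         measure_pmf.prob T {S. run_on K n S x [] = Some v} - real (K * K * t) / real r"
proof -
  define B where "B = {S. reads_corrupted orc x (queries_on K n S x [])}"
  have "measure_pmf.prob T {S. run_on K n S x [] = Some v} \<le>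
      measure_pmf.prob T ({S. run K n S orc [] [] = Some v} \<union> B)"
    by (rule measure_pmf.finite_measure_mono)
       (use run_eq_run_on_if_not_reads_corrupted[of orc "[]"] in \<open>auto simp: B_def\<close>)
  also have "\<dots> \<le> measure_pmf.prob T {S. run K n S orc [] [] = Some v} + measure_pmf.prob T B"
    by (rule measure_Un_le) simp_all
  also have "measure_pmf.prob T B =
      measure_pmf.prob (map_pmf (\<lambda>S. queries_on K n S x []) T) {L. reads_corrupted orc x L}"
    by (simp add: B_def vimage_def)
  also have "\<dots> \<le> real (K * K * t) / real r"
    by (intro prob_reads_corrupted_le[OF oc r sp]) (auto simp: lx length_queries_on dest: queries_on_less)
  finally show ?thesis by linarith
qed

section \<open>Composing strategies\<close>

text \<open>\<open>seq_strat n f D K h\<close> continues the strategy \<open>D\<close> from the history \<open>h\<close> for at most \<open>f\<close>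
  queries and then hands over to \<open>K b\<close>, where \<open>b\<close> is the verdict of \<open>D\<close>; running out of budget
  or querying outside \<open>{..<n}\<close> counts as rejection.\<close>

primrec seq_strat :: "nat \<Rightarrow> nat \<Rightarrow> 'a strategy \<Rightarrow> (bool \<Rightarrow> 'a strategy) \<Rightarrow> 'a list \<Rightarrow> 'a strategy"
where
  "seq_strat n f D K h [] = (case D h of Inr b \<Rightarrow> K b []
     | Inl i \<Rightarrow> if f = 0 \<or> n \<le> i then K False [] else Inl i)"
| "seq_strat n f D K h (a # as) = (case D h of Inr b \<Rightarrow> K b (a # as)
     | Inl i \<Rightarrow> if f = 0 \<or> n \<le> i then K False (a # as) else seq_strat n (f - 1) D K (h @ [a]) as)"

definition verdict :: "nat \<Rightarrow> nat \<Rightarrow> 'a strategy \<Rightarrow> 'a list \<Rightarrow> 'a list \<Rightarrow> bool" where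
  "verdict f n D y h = (case run_on f n D y h of Some b \<Rightarrow> b | None \<Rightarrow> False)"

lemma seq_strat_stop:
  assumes "\<And>i. D h = Inl i \<Longrightarrow> f = 0 \<or> n \<le> i"
  shows "seq_strat n f D K h = K (verdict f n D y h)" and "queries_on f n D y h = []"
proof -
  have "seq_strat n f D K h as = K (verdict f n D y h) as" for as
    using assms by (cases as; cases f) (auto simp: verdict_def split: sum.splits)
  then show "seq_strat n f D K h = K (verdict f n D y h)" ..
  show "queries_on f n D y h = []" using assms by (cases f) (auto split: sum.splits)
qed

lemma seq_strat_continue:
  assumes "D h = Inl i" "i < n"
  shows "run_on (Suc k) n (seq_strat n (Suc f) D K h) y [] =
           run_on k n (seq_strat n f D K (h @ [y ! i])) y []"
    and "queries_on (Suc k) n (seq_strat n (Suc f) D K h) y [] =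
           i # queries_on k n (seq_strat n f D K (h @ [y ! i])) y []"
    and "verdict (Suc f) n D y h = verdict f n D y (h @ [y ! i])"
proof -
  have "run_on k n (seq_strat n (Suc f) D K h) y [y ! i] =
      run_on k n (seq_strat n f D K (h @ [y ! i])) y []"
    by (rule run_on_shift_Nil) (use assms in simp)
  then show "run_on (Suc k) n (seq_strat n (Suc f) D K h) y [] =
      run_on k n (seq_strat n f D K (h @ [y ! i])) y []"
    using assms by simp
  have "queries_on k n (seq_strat n (Suc f) D K h) y [y ! i] =
      queries_on k n (seq_strat n f D K (h @ [y ! i])) y []"
    by (rule queries_on_shift_Nil) (use assms in simp)
  then show "queries_on (Suc k) n (seq_strat n (Suc f) D K h) y [] =
      i # queries_on k n (seq_strat n f D K (h @ [y ! i])) y []"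
    using assms by simp
  show "verdict (Suc f) n D y h = verdict f n D y (h @ [y ! i])"
    using assms by (simp add: verdict_def)
qed

lemma run_on_seq_strat:
  assumes "run_on k n (K (verdict f n D y h)) y [] = Some v"
  shows "run_on (f + k) n (seq_strat n f D K h) y [] = Some v"
  using assms
proof (induction f arbitrary: h)
  case 0
  have "seq_strat n 0 D K h = K (verdict 0 n D y h)" by (rule seq_strat_stop) simp
  then show ?case using 0 by simp
next
  case (Suc f)
  show ?case
  proof (cases "\<exists>i. D h = Inl i \<and> i < n")
    case True
    then obtain i where i: "D h = Inl i" "i < n" by blast
    have "run_on (Suc f + k) n (seq_strat n (Suc f) D K h) y [] =
        run_on (f + k) n (seq_strat n f D K (h @ [y ! i])) y []"
      unfolding add_Suc by (rule seq_strat_continue(1)[where D=D and h=h, OF i])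
    then show ?thesis using Suc.IH[of "h @ [y ! i]"] Suc.prems seq_strat_continue(3)[where D=D and h=h, OF i] by simp
  next
    case False
    then have "seq_strat n (Suc f) D K h = K (verdict (Suc f) n D y h)"
      by (intro seq_strat_stop) auto
    then show ?thesis by (simp only:) (rule run_on_mono[OF Suc.prems], simp)
  qed
qed

lemma queries_on_seq_strat:
  "queries_on (f + k) n (seq_strat n f D K h) y [] =
     queries_on f n D y h @ queries_on (f + k - length (queries_on f n D y h)) n (K (verdict f n D y h)) y []"
proof (induction f arbitrary: h)
  case 0
  have "seq_strat n 0 D K h = K (verdict 0 n D y h)" by (rule seq_strat_stop) simp
  then show ?case by simp
next
  case (Suc f)
  show ?case
  proof (cases "\<exists>i. D h = Inl i \<and> i < n")
    case True
    then obtain i where i: "D h = Inl i" "i < n" by blast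
    have "queries_on (Suc f + k) n (seq_strat n (Suc f) D K h) y [] =
        i # queries_on (f + k) n (seq_strat n f D K (h @ [y ! i])) y []"
      unfolding add_Suc by (rule seq_strat_continue(2)[where D=D and h=h, OF i])
    then show ?thesis using Suc.IH[of "h @ [y ! i]"] i by (simp add: seq_strat_continue(3)[where D=D and h=h, OF i])
  next
    case False
    have "seq_strat n (Suc f) D K h = K (verdict (Suc f) n D y h)"
      by (rule seq_strat_stop) (use False in auto)
    moreover have "queries_on (Suc f) n D y h = []"
      by (rule seq_strat_stop(2)) (use False in auto)
    ultimately show ?thesis by simp
  qed
qed

definition maj_strat :: "nat \<Rightarrow> nat \<Rightarrow> 'a strategy \<Rightarrow> 'a strategy \<Rightarrow> 'a strategy \<Rightarrow> 'a strategy" where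
  "maj_strat m q D1 D2 D3 = seq_strat m q D1 (\<lambda>b1. seq_strat m q D2 (\<lambda>b2.
     seq_strat m q D3 (\<lambda>b3 _. Inr (maj3 b1 b2 b3)) []) []) []"

lemma run_on_maj_strat:
  "run_on (3 * q) m (maj_strat m q D1 D2 D3) y [] =
     Some (maj3 (verdict q m D1 y []) (verdict q m D2 y []) (verdict q m D3 y []))"
proof -
  have "3 * q = q + (q + (q + 0))" by simp
  then show ?thesis unfolding maj_strat_def
    by (simp only:) (rule run_on_seq_strat, rule run_on_seq_strat, rule run_on_seq_strat, simp)
qed

text \<open>\<open>cached_sim m f D h ql\<close> runs \<open>D\<close> (with history \<open>h\<close> and budget \<open>f\<close>) as a strategy that queries
  every position at most once: \<open>ql\<close> lists the distinct positions queried so far, in the order of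
  their answers, and repeated queries of \<open>D\<close> are answered from this cache. Failure of \<open>D\<close> is
  turned into the out-of-range query \<open>m\<close>.\<close>

fun cached_sim :: "nat \<Rightarrow> nat \<Rightarrow> 'a strategy \<Rightarrow> 'a list \<Rightarrow> nat list \<Rightarrow> 'a strategy" where
  "cached_sim m 0 D h ql as = (case D h of Inr b \<Rightarrow> Inr b | Inl i \<Rightarrow> Inl m)"
| "cached_sim m (Suc f) D h ql as = (case D h of Inr b \<Rightarrow> Inr b | Inl i \<Rightarrow>
      if m \<le> i then Inl m
      else if i \<in> set ql then cached_sim m f D (h @ [the (map_of (zip ql as) i)]) ql as
      else if length ql < length as then cached_sim m f D (h @ [as ! length ql]) (ql @ [i]) as
      else Inl i)"

declare cached_sim.simps [simp del]

lemma cached_sim_hit: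
  assumes "D h = Inl i" "i < m" "i \<in> set ql" "length as = length ql"
  shows "cached_sim m (Suc f) D h ql (as @ more) =
    cached_sim m f D (h @ [the (map_of (zip ql as) i)]) ql (as @ more)"
  using assms by (simp add: cached_sim.simps zip_append2)

lemma cached_sim_miss:
  assumes "D h = Inl i" "i < m" "i \<notin> set ql" "length as = length ql"
  shows "cached_sim m (Suc f) D h ql ((as @ [a]) @ more) =
    cached_sim m f D (h @ [a]) (ql @ [i]) ((as @ [a]) @ more)"
  using assms by (simp add: cached_sim.simps nth_append)

lemma queries_on_cached_sim_hit:
  assumes "D h = Inl i" "i < m" "i \<in> set ql" "length as = length ql"
  shows "queries_on k m (cached_sim m (Suc f) D h ql) z as =
    queries_on k m (cached_sim m f D (h @ [the (map_of (zip ql as) i)]) ql) z as"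
  by (rule queries_on_cong) (use cached_sim_hit[of D h i m ql as f, OF assms] in simp)

lemma queries_on_cached_sim_miss:
  assumes "D h = Inl i" "i < m" "i \<notin> set ql" "length as = length ql"
  shows "queries_on (Suc k) m (cached_sim m (Suc f) D h ql) z as =
         i # queries_on k m (cached_sim m f D (h @ [z ! i]) (ql @ [i])) z (as @ [z ! i])"
proof -
  have "queries_on k m (cached_sim m (Suc f) D h ql) z (as @ [z ! i]) =
      queries_on k m (cached_sim m f D (h @ [z ! i]) (ql @ [i])) z (as @ [z ! i])"
    by (rule queries_on_cong) (use cached_sim_miss[of D h i m ql as f, OF assms] in simp)
  then show ?thesis using assms by (simp add: cached_sim.simps)
qed

lemma queries_on_cached_sim_cases:
  obtains (stop) "\<And>z. queries_on k m (cached_sim m f D h ql) z as = []"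
  | (hit) f' i where "f = Suc f'" "D h = Inl i" "i < m" "i \<in> set ql"
  | (miss) f' k' i where "f = Suc f'" "k = Suc k'" "D h = Inl i" "i < m" "i \<notin> set ql"
proof (cases "\<exists>f' i. f = Suc f' \<and> D h = Inl i \<and> i < m")
  case True
  then obtain f' i where f': "f = Suc f'" "D h = Inl i" "i < m" by blast
  show ?thesis
  proof (cases "i \<in> set ql")
    case False
    show ?thesis
    proof (cases k)
      case 0
      then show ?thesis using that(1) by simp
    qed (use f' False that(3) in blast)
  qed (use f' that(2) in blast)
next
  case False
  then have "queries_on k m (cached_sim m f D h ql) z as = []" for z
    by (cases k; cases f) (auto simp: cached_sim.simps split: sum.splits)
  then show ?thesis using that(1) by blast
qed

lemma run_on_cached_sim:
  assumes "length y = m" "f \<le> k"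
  shows "run_on k m (cached_sim m f D h ql) y (map ((!) y) ql) = run_on f m D y h"
  using assms(2)
proof (induction f arbitrary: h ql k)
  case 0
  show ?case by (cases k) (auto simp: cached_sim.simps split: sum.splits)
next
  case (Suc f)
  then obtain k' where k: "k = Suc k'" by (cases k) auto
  show ?case
  proof (cases "\<exists>i. D h = Inl i \<and> i < m")
    case True
    then obtain i where i: "D h = Inl i" "i < m" by blast
    show ?thesis
    proof (cases "i \<in> set ql")
      case True
      have "map_of (zip ql (map ((!) y) ql)) i = Some (y ! i)"
        using True by (simp add: map_of_zip_map)
      then have "run_on k m (cached_sim m (Suc f) D h ql) y (map ((!) y) ql) =
          run_on k m (cached_sim m f D (h @ [y ! i]) ql) y (map ((!) y) ql)"
        by (intro run_on_cong) (use cached_sim_hit[of D h i m ql "map ((!) y) ql" f] i True in simp)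
      then show ?thesis using Suc i by simp
    next
      case False
      have "run_on k m (cached_sim m (Suc f) D h ql) y (map ((!) y) ql) =
          run_on k' m (cached_sim m (Suc f) D h ql) y (map ((!) y) (ql @ [i]))"
        using i False by (simp add: k cached_sim.simps)
      also have "\<dots> = run_on k' m (cached_sim m f D (h @ [y ! i]) (ql @ [i])) y (map ((!) y) (ql @ [i]))"
        by (rule run_on_cong) (use cached_sim_miss[of D h i m ql "map ((!) y) ql" f "y ! i"] i False in simp)
      also have "\<dots> = run_on f m D y (h @ [y ! i])"
        using Suc.IH[of k' "h @ [y ! i]" "ql @ [i]"] Suc.prems k by simp
      also have "\<dots> = run_on (Suc f) m D y h" using i by simp
      finally show ?thesis .
    qed
  qed (use k in \<open>auto simp: cached_sim.simps split: sum.splits\<close>)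
qed

lemma queries_on_cached_sim_indep:
  assumes "length as = length ql" "\<And>j. j < m \<Longrightarrow> j \<notin> set ql \<Longrightarrow> y ! j = y' ! j"
  shows "queries_on k m (cached_sim m f D h ql) y as = queries_on k m (cached_sim m f D h ql) y' as \<and>
         set (queries_on k m (cached_sim m f D h ql) y as) \<inter> set ql = {}"
  using assms
proof (induction f arbitrary: h ql as k)
  case 0
  show ?case by (cases k) (auto simp: cached_sim.simps split: sum.splits)
next
  case (Suc f)
  show ?case
  proof (cases rule: queries_on_cached_sim_cases[of k m "Suc f" D h ql as])
    case (hit f' i)
    show ?thesis
      unfolding queries_on_cached_sim_hit[where D=D and h=h, OF hit(2-4) Suc.prems(1)]
      by (rule Suc.IH) (use Suc.prems in auto)
  next
    case (miss f' k' i)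
    let ?Q = "\<lambda>z. queries_on k' m (cached_sim m f D (h @ [y ! i]) (ql @ [i])) z (as @ [y ! i])"
    have yi: "y ! i = y' ! i" using Suc.prems(2) miss by simp
    have "?Q y = ?Q y' \<and> set (?Q y) \<inter> set (ql @ [i]) = {}"
      by (rule Suc.IH) (use Suc.prems in auto)
    then show ?thesis
      unfolding miss(2) queries_on_cached_sim_miss[where D=D and h=h, OF miss(3-5) Suc.prems(1)]
      using yi miss(5) by auto
  qed simp
qed

text \<open>\<open>block_sample m x \<beta>\<close> is \<open>z\<^sub>\<beta>\<close>; \<open>relabel\<close> turns the queries of a strategy for \<open>z\<^sub>\<beta>\<close> into
  queries to \<open>x\<close>, sending out-of-range queries to the out-of-range position \<open>n\<close>.\<close>

definition block_sample :: "nat \<Rightarrow> 'a list \<Rightarrow> (nat \<Rightarrow> nat) \<Rightarrow> 'a list" where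
  "block_sample m x \<beta> = map (\<lambda>v. x ! (\<beta> v * m + v)) [0..<m]"

definition relabel :: "nat \<Rightarrow> nat \<Rightarrow> (nat \<Rightarrow> nat) \<Rightarrow> 'a strategy \<Rightarrow> 'a strategy" where
  "relabel m n \<beta> S as = (case S as of Inr b \<Rightarrow> Inr b | Inl v \<Rightarrow> Inl (if v < m then \<beta> v * m + v else n))"

lemma length_block_sample [simp]: "length (block_sample m x \<beta>) = m"
  by (simp add: block_sample_def)

lemma run_on_relabel:
  assumes "\<And>v. v < m \<Longrightarrow> \<beta> v * m + v < n"
  shows "run_on k n (relabel m n \<beta> S) x as = run_on k m S (block_sample m x \<beta>) as \<and>
    queries_on k n (relabel m n \<beta> S) x as =
      map (\<lambda>v. \<beta> v * m + v) (queries_on k m S (block_sample m x \<beta>) as)"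
proof (induction k arbitrary: as)
  case (Suc k)
  show ?case
  proof (cases "\<exists>v. S as = Inl v \<and> v < m")
    case True
    then obtain v where v: "S as = Inl v" "v < m" by blast
    then have "block_sample m x \<beta> ! v = x ! (\<beta> v * m + v)" by (simp add: block_sample_def)
    then show ?thesis using v Suc.IH[of "as @ [x ! (\<beta> v * m + v)]"] assms[OF v(2)]
      by (simp add: relabel_def)
  qed (auto simp: relabel_def split: sum.splits)
qed (auto simp: relabel_def split: sum.splits)

text \<open>A fresh query \<open>i\<close> of the cached simulation is read at \<open>\<beta> i * m + i\<close>, and the rest of the run
  does not depend on \<open>\<beta> i\<close> any more.\<close>

lemma queries_on_cached_sim_block_sample_upd:
  fixes x :: "'a list" and c :: nat
  assumes "D h = Inl i" "i < m" "i \<notin> set ql" "length as = length ql"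
  defines "a \<equiv> x ! (c * m + i)"
  shows "map (\<lambda>v. (\<beta>(i := c)) v * m + v)
      (queries_on (Suc k) m (cached_sim m (Suc f) D h ql) (block_sample m x (\<beta>(i := c))) as) =
    (c * m + i) # map (\<lambda>v. \<beta> v * m + v)
      (queries_on k m (cached_sim m f D (h @ [a]) (ql @ [i])) (block_sample m x \<beta>) (as @ [a]))"
proof -
  let ?Q = "\<lambda>z. queries_on k m (cached_sim m f D (h @ [a]) (ql @ [i])) z (as @ [a])"
  have "block_sample m x (\<beta>(i := c)) ! i = a" using assms(2) by (simp add: a_def block_sample_def)
  moreover have "?Q (block_sample m x (\<beta>(i := c))) = ?Q (block_sample m x \<beta>) \<and>
      set (?Q (block_sample m x (\<beta>(i := c)))) \<inter> set (ql @ [i]) = {}"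
    by (rule queries_on_cached_sim_indep) (use assms(4) in \<open>auto simp: block_sample_def\<close>)
  ultimately show ?thesis
    using queries_on_cached_sim_miss[where D=D and h=h, OF assms(1-4)] by auto
qed

lemma spread_cached_sim:
  assumes r: "0 < r" and m: "0 < m" and "length as = length ql"
  shows "spread r (map_pmf
    (\<lambda>\<beta>. map (\<lambda>v. \<beta> v * m + v) (queries_on k m (cached_sim m f D h ql) (block_sample m x \<beta>) as))
    (Pi_pmf ({..<m} - set ql) 0 (\<lambda>_. unif r)))"
  using assms(3)
proof (induction f arbitrary: h ql as k)
  case 0
  show ?case by (intro spread_map_Nil) (cases k; auto simp: cached_sim.simps split: sum.splits)
next
  case (Suc f)
  show ?case
  proof (cases rule: queries_on_cached_sim_cases[of k m "Suc f" D h ql as])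
    case stop
    then show ?thesis by (intro spread_map_Nil) simp
  next
    case (hit f' i)
    then show ?thesis
      using Suc.IH[OF Suc.prems] by (simp add: queries_on_cached_sim_hit[where D=D and h=h, OF hit(2-4) Suc.prems])
  next
    case (miss f' k' i)
    define A' where "A' = {..<m} - set (ql @ [i])"
    have A: "{..<m} - set ql = insert i A'" "i \<notin> A'" "finite A'"
      using miss by (auto simp: A'_def)
    define rest where "rest c \<beta> = map (\<lambda>v. \<beta> v * m + v)
        (queries_on k' m (cached_sim m f D (h @ [x ! (c * m + i)]) (ql @ [i])) (block_sample m x \<beta>)
          (as @ [x ! (c * m + i)]))" for c \<beta>
    have upd: "map (\<lambda>v. (\<beta>(i := c)) v * m + v)
        (queries_on k m (cached_sim m (Suc f) D h ql) (block_sample m x (\<beta>(i := c))) as) =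
      [c * m + i] @ rest c \<beta>" for c \<beta>
      unfolding rest_def miss(2) append_Cons append_Nil
      by (rule queries_on_cached_sim_block_sample_upd[where D=D and h=h, OF miss(3-5) Suc.prems])
    have "map_pmf (\<lambda>\<beta>. map (\<lambda>v. \<beta> v * m + v)
          (queries_on k m (cached_sim m (Suc f) D h ql) (block_sample m x \<beta>) as))
        (Pi_pmf ({..<m} - set ql) 0 (\<lambda>_. unif r)) =
      map_pmf (\<lambda>(c, \<beta>). [c * m + i] @ rest c \<beta>) (pair_pmf (unif r) (Pi_pmf A' 0 (\<lambda>_. unif r)))"
      unfolding A(1) Pi_pmf_insert[OF A(3,2)] pmf.map_comp
      by (intro pmf.map_cong) (auto simp: upd simp del: fun_upd_apply)
    moreover have "spread r (map_pmf (\<lambda>(c, \<beta>). [c * m + i] @ rest c \<beta>)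
        (pair_pmf (unif r) (Pi_pmf A' 0 (\<lambda>_. unif r))))"
    proof (rule spread_append[where ll=1])
      fix c
      show "spread r (map_pmf (rest c) (Pi_pmf A' 0 (\<lambda>_. unif r)))"
        unfolding rest_def A'_def by (rule Suc.IH) (use Suc.prems in simp)
    qed (simp_all add: spread_unif_singleton[OF r m])
    ultimately show ?thesis by simp
  qed
qed

section \<open>Repetitions and Hamming distance\<close>

definition rep :: "nat \<Rightarrow> 'a list \<Rightarrow> 'a list" where
  "rep r z = concat (replicate r z)"

lemma length_rep [simp]: "length (rep r z) = r * length z"
  by (induction r) (auto simp: rep_def)

lemma rep_nth: "i < length z \<Longrightarrow> j < r \<Longrightarrow> rep r z ! (j * length z + i) = z ! i"
proof (induction r arbitrary: j)
  case (Suc r)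
  have rep_Suc: "rep (Suc r) z = z @ rep r z" by (simp add: rep_def)
  show ?case
  proof (cases j)
    case (Suc j')
    then have "rep (Suc r) z ! (j * length z + i) = rep r z ! (j' * length z + i)"
      using Suc.prems by (simp add: rep_Suc nth_append)
    then show ?thesis using Suc.IH[of j'] Suc.prems \<open>j = Suc j'\<close> by simp
  qed (use Suc.prems in \<open>simp add: rep_Suc nth_append\<close>)
qed simp

lemma rep_in_rep_prop: "p \<in> P \<Longrightarrow> rep r p \<in> rep_prop r P"
  by (simp add: rep_def rep_prop_def)

lemma block_pos_less: "c < r \<Longrightarrow> v < m \<Longrightarrow> c * m + v < m * (r::nat)"
proof -
  assume "c < r" "v < m"
  hence "c * m + v < (c + 1) * m" by simp
  also have "\<dots> \<le> r * m" using \<open>c < r\<close> by (intro mult_right_mono) auto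
  finally show ?thesis by (simp add: mult.commute)
qed

lemma sum_blocks:
  fixes g :: "nat \<Rightarrow> 'b::comm_monoid_add"
  shows "(\<Sum>k<r * m. g k) = (\<Sum>j<r. \<Sum>i<m. g (j * m + i))"
proof -
  have "(\<Sum>k<r * m. g k) = (\<Sum>j<r. sum g {j * m..<j * m + m})"
    by (rule sum.nat_group[symmetric])
  also have "\<dots> = (\<Sum>j<r. \<Sum>i<m. g (j * m + i))"
  proof (rule sum.cong[OF refl])
    fix j
    have "{j * m..<j * m + m} = (\<lambda>i. j * m + i) ` {..<m}"
    proof (intro set_eqI iffI)
      fix k assume "k \<in> {j * m..<j * m + m}"
      hence "k = j * m + (k - j * m)" "k - j * m < m" by auto
      thus "k \<in> (\<lambda>i. j * m + i) ` {..<m}" by blast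
    qed auto
    thus "sum g {j * m..<j * m + m} = (\<Sum>i<m. g (j * m + i))"
      by (simp add: sum.reindex inj_on_def)
  qed
  finally show ?thesis .
qed

lemma card_less_eq_sum_of_bool:
  fixes n :: nat
  shows "real (card {k. k < n \<and> P k}) = (\<Sum>k<n. of_bool (P k))"
proof -
  have "{k. k < n \<and> P k} = {k \<in> {..<n}. P k}" by auto
  moreover have "real (card {k \<in> {..<n}. P k}) = (\<Sum>k\<in>{k \<in> {..<n}. P k}. 1)" by simp
  moreover have "\<dots> = (\<Sum>k<n. if P k then 1 else 0)" by (rule sum.inter_filter) simp
  moreover have "\<dots> = (\<Sum>k<n. of_bool (P k))" by (rule sum.cong) auto
  ultimately show ?thesis by (simp only:)
qed

lemma hdist_sum: "hdist x y = (\<Sum>k<length x. of_bool (x ! k \<noteq> y ! k)) / real (length x)"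
  unfolding hdist_def card_less_eq_sum_of_bool ..

lemma hdist_self: "hdist x x = 0"
  by (simp add: hdist_def)

lemma hdist_triangle:
  assumes "length y = length x" "length z = length x"
  shows "hdist x z \<le> hdist x y + hdist y z"
proof -
  have "card {i. i < length x \<and> x ! i \<noteq> z ! i} \<le>
        card ({i. i < length x \<and> x ! i \<noteq> y ! i} \<union> {i. i < length x \<and> y ! i \<noteq> z ! i})"
    by (intro card_mono) auto
  also have "\<dots> \<le> card {i. i < length x \<and> x ! i \<noteq> y ! i} + card {i. i < length x \<and> y ! i \<noteq> z ! i}"
    by (rule card_Un_le)
  finally have "real (card {i. i < length x \<and> x ! i \<noteq> z ! i}) \<le>
      real (card {i. i < length x \<and> x ! i \<noteq> y ! i}) + real (card {i. i < length y \<and> y ! i \<noteq> z ! i})"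
    using assms by simp
  thus ?thesis unfolding hdist_def using assms
    by (simp add: add_divide_distrib[symmetric] divide_right_mono)
qed

lemma hdist_rep:
  assumes "length z = m" "length p = m" "0 < r"
  shows "hdist (rep r z) (rep r p) = hdist z p"
proof -
  have "(\<Sum>k<r * m. of_bool (rep r z ! k \<noteq> rep r p ! k)) =
      (\<Sum>j<r. \<Sum>i<m. of_bool (rep r z ! (j * m + i) \<noteq> rep r p ! (j * m + i)) :: real)"
    by (rule sum_blocks)
  also have "\<dots> = (\<Sum>j<r. \<Sum>i<m. of_bool (z ! i \<noteq> p ! i))"
    using rep_nth[of _ z] rep_nth[of _ p] assms by (intro sum.cong refl) auto
  also have "\<dots> = real r * (\<Sum>i<m. of_bool (z ! i \<noteq> p ! i))" by simp
  finally show ?thesis using assms unfolding hdist_sum by (simp add: mult.commute)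
qed

lemma hdist_rep_gt_if_far:
  assumes far: "far \<epsilon> (rep_prop r P) x" and lx: "length x = r * m" and r: "0 < r"
    and p: "p \<in> P" "length p = m" and z: "length z = m" and close: "hdist z p < \<epsilon> / 2"
  shows "hdist x (rep r z) > \<epsilon> / 2"
proof -
  have "hdist x (rep r p) \<ge> \<epsilon>" using far rep_in_rep_prop[OF p(1), of r] lx p(2) by (auto simp: far_def)
  moreover have "hdist x (rep r p) \<le> hdist x (rep r z) + hdist (rep r z) (rep r p)"
    by (rule hdist_triangle) (use lx z p in auto)
  moreover have "hdist (rep r z) (rep r p) = hdist z p" by (rule hdist_rep) (use z p r in auto)
  ultimately show ?thesis using close by linarith
qed

section \<open>Comparing random blocks\<close>

text \<open>A check \<open>(i, j, c)\<close> compares the symbols at offset \<open>i\<close> of the blocks \<open>j\<close> and \<open>c\<close>.\<close>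

definition triple_pmf :: "nat \<Rightarrow> nat \<Rightarrow> (nat \<times> nat \<times> nat) pmf" where
  "triple_pmf m r = pair_pmf (unif m) (pair_pmf (unif r) (unif r))"

definition mismatch_count :: "'a list \<Rightarrow> nat \<Rightarrow> nat \<Rightarrow> nat" where
  "mismatch_count x m r = (\<Sum>i<m. \<Sum>j<r. card {c. c < r \<and> x ! (j * m + i) \<noteq> x ! (c * m + i)})"

definition block_choice_pmf :: "nat \<Rightarrow> nat \<Rightarrow> (nat \<Rightarrow> nat) pmf" where
  "block_choice_pmf m r = Pi_pmf {..<m} 0 (\<lambda>_. unif r)"

lemma set_pmf_triple:
  "0 < r \<Longrightarrow> 0 < m \<Longrightarrow> set_pmf (triple_pmf m r) = {..<m} \<times> {..<r} \<times> {..<r}"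
  by (simp add: triple_pmf_def set_pmf_unif)

lemma prob_triple_mismatch:
  assumes r: "0 < r" and m: "0 < m"
  shows "measure_pmf.prob (triple_pmf m r) {(i, j, c). x ! (j * m + i) \<noteq> x ! (c * m + i)} =
    real (mismatch_count x m r) / (real r * real m * real r)"
proof -
  let ?E = "{(i, j, c). x ! (j * m + i) \<noteq> x ! (c * m + i)}"
  let ?B = "{..<m} \<times> {..<r} \<times> {..<r}"
  have fin: "finite (?E \<inter> ?B)" by (rule finite_subset[of _ ?B]) auto
  have "measure_pmf.prob (triple_pmf m r) ?E = measure_pmf.prob (triple_pmf m r) (?E \<inter> ?B)"
    using measure_Int_set_pmf[of "triple_pmf m r" ?E] set_pmf_triple[OF r m] by simp
  also have "\<dots> = (\<Sum>w\<in>?E \<inter> ?B. pmf (triple_pmf m r) w)"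
    using fin by (rule measure_measure_pmf_finite)
  also have "\<dots> = (\<Sum>w\<in>?E \<inter> ?B. 1 / (real r * real m * real r))"
    by (rule sum.cong) (auto simp: triple_pmf_def pmf_pair r m pmf_unif)
  also have "\<dots> = real (card (?E \<inter> ?B)) / (real r * real m * real r)" by simp
  also have "?E \<inter> ?B = (SIGMA i:{..<m}. SIGMA j:{..<r}. {c. c < r \<and> x ! (j * m + i) \<noteq> x ! (c * m + i)})"
    by auto
  also have "card \<dots> = mismatch_count x m r" by (simp add: mismatch_count_def card_SigmaI)
  finally show ?thesis .
qed

lemma finite_set_block_choice: "0 < r \<Longrightarrow> finite (set_pmf (block_choice_pmf m r))"
  unfolding block_choice_pmf_def
  by (rule finite_subset[OF set_Pi_pmf_subset']) (auto intro!: finite_PiE_dflt simp: set_pmf_unif)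

lemma block_choice_support: "\<beta> \<in> set_pmf (block_choice_pmf m r) \<Longrightarrow> 0 < r \<Longrightarrow> \<beta> v < r"
  unfolding block_choice_pmf_def by (rule Pi_unif_support) auto

lemma hdist_rep_block_sample:
  assumes "length x = r * m"
  shows "hdist x (rep r (block_sample m x \<beta>)) =
    (\<Sum>j<r. \<Sum>i<m. of_bool (x ! (j * m + i) \<noteq> x ! (\<beta> i * m + i))) / (real r * real m)"
proof -
  have "(\<Sum>k<r * m. of_bool (x ! k \<noteq> rep r (block_sample m x \<beta>) ! k) :: real) =
      (\<Sum>j<r. \<Sum>i<m. of_bool (x ! (j * m + i) \<noteq> rep r (block_sample m x \<beta>) ! (j * m + i)))"
    by (rule sum_blocks)
  also have "\<dots> = (\<Sum>j<r. \<Sum>i<m. of_bool (x ! (j * m + i) \<noteq> x ! (\<beta> i * m + i)))"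
    using rep_nth[of _ "block_sample m x \<beta>"] by (intro sum.cong refl) (auto simp: block_sample_def)
  finally show ?thesis unfolding hdist_sum assms by simp
qed

text \<open>The expected distance of \<open>x\<close> from \<open>z\<^sub>\<beta>\<^sup>r\<close> equals the rejection probability of a single check.\<close>

lemma expectation_hdist_block_sample:
  assumes r: "0 < r" and lx: "length x = r * m"
  shows "measure_pmf.expectation (block_choice_pmf m r) (\<lambda>\<beta>. hdist x (rep r (block_sample m x \<beta>))) =
    real (mismatch_count x m r) / (real r * real m * real r)"
proof -
  let ?mis = "\<lambda>j i c. of_bool (x ! (j * m + i) \<noteq> x ! (c * m + i)) :: real"
  have int: "integrable (measure_pmf (block_choice_pmf m r)) g" for g :: "_ \<Rightarrow> real"
    by (rule integrable_measure_pmf_finite[OF finite_set_block_choice[OF r]])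
  have component: "measure_pmf.expectation (block_choice_pmf m r) (\<lambda>\<beta>. ?mis j i (\<beta> i)) =
      real (card {c. c < r \<and> x ! (j * m + i) \<noteq> x ! (c * m + i)}) / real r" if "i < m" for i j
  proof -
    have "measure_pmf.expectation (block_choice_pmf m r) (\<lambda>\<beta>. ?mis j i (\<beta> i)) =
        measure_pmf.expectation (map_pmf (\<lambda>\<beta>. \<beta> i) (block_choice_pmf m r)) (?mis j i)"
      by simp
    also have "\<dots> = measure_pmf.expectation (unif r) (?mis j i)"
      using that by (simp add: block_choice_pmf_def Pi_pmf_component)
    also have "\<dots> = (\<Sum>c<r. ?mis j i c) / real r"
      using r by (subst integral_pmf_of_set) auto
    finally show ?thesis by (simp only: card_less_eq_sum_of_bool)
  qed
  have "measure_pmf.expectation (block_choice_pmf m r) (\<lambda>\<beta>. hdist x (rep r (block_sample m x \<beta>))) =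
      (\<Sum>j<r. \<Sum>i<m. measure_pmf.expectation (block_choice_pmf m r) (\<lambda>\<beta>. ?mis j i (\<beta> i))) /
        (real r * real m)"
    by (simp add: hdist_rep_block_sample[OF lx] integral_sum int del: sum_of_bool_eq)
  also have "\<dots> = real (mismatch_count x m r) / (real r * real m * real r)"
    by (simp add: component mismatch_count_def sum_divide_distrib[symmetric] sum.swap[of _ "{..<r}"]
        del: sum_of_bool_eq)
  finally show ?thesis .
qed

lemma prob_hdist_block_sample_ge:
  assumes r: "0 < r" and lx: "length x = r * m" and a: "0 < a"
  shows "measure_pmf.prob (block_choice_pmf m r) {\<beta>. a \<le> hdist x (rep r (block_sample m x \<beta>))} \<le>
    real (mismatch_count x m r) / (real r * real m * real r) / a"
proof -
  have "measure_pmf.prob (block_choice_pmf m r)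
      {\<beta> \<in> space (measure_pmf (block_choice_pmf m r)). hdist x (rep r (block_sample m x \<beta>)) \<ge> a}
    \<le> measure_pmf.expectation (block_choice_pmf m r) (\<lambda>\<beta>. hdist x (rep r (block_sample m x \<beta>))) / a"
    by (rule integral_Markov_inequality_measure[where A=UNIV])
       (auto simp: a integrable_measure_pmf_finite[OF finite_set_block_choice[OF r]] hdist_def)
  thus ?thesis using expectation_hdist_block_sample[OF r lx] by simp
qed

definition check_pos :: "nat \<Rightarrow> (nat \<Rightarrow> nat \<times> nat \<times> nat) \<Rightarrow> nat \<Rightarrow> nat" where
  "check_pos m w k = (case w (k div 2) of (i, j, c) \<Rightarrow> if even k then j * m + i else c * m + i)"

definition check_queries :: "nat \<Rightarrow> nat \<Rightarrow> (nat \<Rightarrow> nat \<times> nat \<times> nat) \<Rightarrow> nat list" where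
  "check_queries m s w = map (check_pos m w) [0..<2 * s]"

definition check_strat :: "nat \<Rightarrow> nat \<Rightarrow> (nat \<Rightarrow> nat \<times> nat \<times> nat) \<Rightarrow> 'a strategy" where
  "check_strat m s w as = (if length as < 2 * s then Inl (check_pos m w (length as))
     else Inr (\<forall>l<s. as ! (2 * l) = as ! (2 * l + 1)))"

definition checks_pmf :: "nat \<Rightarrow> nat \<Rightarrow> nat \<Rightarrow> (nat \<Rightarrow> nat \<times> nat \<times> nat) pmf" where
  "checks_pmf m r s = Pi_pmf {..<s} (0, 0, 0) (\<lambda>_. triple_pmf m r)"

definition consistent_triples :: "'a list \<Rightarrow> nat \<Rightarrow> (nat \<times> nat \<times> nat) set" where
  "consistent_triples x m = {(i, j, c). x ! (j * m + i) = x ! (c * m + i)}"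

lemma length_check_queries [simp]: "length (check_queries m s w) = 2 * s"
  by (simp add: check_queries_def)

lemma run_on_check_strat_from:
  assumes pos: "\<And>k. k < 2 * s \<Longrightarrow> check_pos m w k < n"
    and "length as + d = 2 * s" and "\<forall>k<length as. as ! k = x ! check_pos m w k"
  shows "run_on d n (check_strat m s w) x as =
      Some (\<forall>l<s. x ! check_pos m w (2 * l) = x ! check_pos m w (2 * l + 1)) \<and>
    queries_on d n (check_strat m s w) x as = map (check_pos m w) [length as..<2 * s]"
  using assms(2,3)
proof (induction d arbitrary: as)
  case 0
  then show ?case by (auto simp: check_strat_def)
next
  case (Suc d)
  let ?p = "check_pos m w (length as)"
  have lt: "length as < 2 * s" using Suc.prems by simp
  have "\<forall>k<length (as @ [x ! ?p]). (as @ [x ! ?p]) ! k = x ! check_pos m w k"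
    using Suc.prems by (auto simp: nth_append less_Suc_eq)
  then have "run_on d n (check_strat m s w) x (as @ [x ! ?p]) =
      Some (\<forall>l<s. x ! check_pos m w (2 * l) = x ! check_pos m w (2 * l + 1)) \<and>
    queries_on d n (check_strat m s w) x (as @ [x ! ?p]) = map (check_pos m w) [Suc (length as)..<2 * s]"
    using Suc by simp
  moreover have "check_strat m s w as = Inl ?p" using lt by (simp add: check_strat_def)
  ultimately show ?case using pos[OF lt] lt by (simp add: upt_conv_Cons)
qed

lemma run_on_check_strat:
  assumes "\<And>k. k < 2 * s \<Longrightarrow> check_pos m w k < n"
  shows "verdict (2 * s) n (check_strat m s w) x [] = (\<forall>l<s. w l \<in> consistent_triples x m) \<and>
         queries_on (2 * s) n (check_strat m s w) x [] = check_queries m s w"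
proof -
  have "(\<forall>l<s. x ! check_pos m w (2 * l) = x ! check_pos m w (2 * l + 1)) =
      (\<forall>l<s. w l \<in> consistent_triples x m)"
    by (auto simp: check_pos_def consistent_triples_def split: prod.splits)
  thus ?thesis using run_on_check_strat_from[OF assms, where as="[]" and d="2 * s" and x=x]
    by (simp add: verdict_def check_queries_def)
qed

lemma spread_triple_queries:
  assumes r: "0 < r" and m: "0 < m"
  shows "spread r (map_pmf (\<lambda>(i, j, c). [j * m + i, c * m + i]) (triple_pmf m r))"
proof -
  have "map_pmf (\<lambda>(i, j, c). [j * m + i, c * m + i]) (triple_pmf m r) =
      bind_pmf (unif m) (\<lambda>i. map_pmf (\<lambda>(j, c). [j * m + i] @ [c * m + i]) (pair_pmf (unif r) (unif r)))"
    by (simp add: triple_pmf_def map_pair_pmf_eq_bind_fst case_prod_unfold)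
  also have "spread r \<dots>"
    by (intro spread_bind spread_append[where ll=1] spread_unif_singleton[OF r m]) simp
  finally show ?thesis .
qed

lemma spread_check_queries:
  assumes r: "0 < r" and m: "0 < m"
  shows "spread r (map_pmf (check_queries m s) (checks_pmf m r s))"
proof (induction s)
  case 0
  show ?case by (rule spread_map_Nil) (simp add: check_queries_def)
next
  case (Suc s)
  let ?pair = "\<lambda>(i, j, c). [j * m + i, c * m + i]"
  have "check_queries m (Suc s) (w(s := t)) = check_queries m s w @ ?pair t" for w t
  proof -
    have "map (check_pos m (w(s := t))) [0..<2 * s] = map (check_pos m w) [0..<2 * s]"
      by (intro map_cong refl) (auto simp: check_pos_def)
    moreover have "[2 * s..<2 * Suc s] = [2 * s, 2 * s + 1]" by (simp add: upt_rec)
    moreover have "[0..<2 * Suc s] = [0..<2 * s] @ [2 * s..<2 * Suc s]"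
      by (simp add: upt_add_eq_append[symmetric])
    ultimately show ?thesis by (auto simp: check_queries_def check_pos_def split: prod.splits)
  qed
  moreover have "{..<Suc s} = insert s {..<s}" by auto
  ultimately have "map_pmf (check_queries m (Suc s)) (checks_pmf m r (Suc s)) =
      map_pmf (\<lambda>(w, t). check_queries m s w @ ?pair t) (pair_pmf (checks_pmf m r s) (triple_pmf m r))"
    unfolding checks_pmf_def
    by (subst pair_commute_pmf) (simp add: Pi_pmf_insert pmf.map_comp o_def case_prod_unfold)
  also have "spread r \<dots>"
    by (rule spread_append[where ll="2 * s"])
       (use Suc spread_triple_queries[OF r m] in \<open>auto simp: check_queries_def\<close>)
  finally show ?case .
qed

lemma checks_pmf_support:
  assumes "w \<in> set_pmf (checks_pmf m r s)" "l < s" "0 < r" "0 < m"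
  shows "w l \<in> {..<m} \<times> {..<r} \<times> {..<r}"
proof -
  have "w \<in> PiE_dflt {..<s} (0, 0, 0) (set_pmf \<circ> (\<lambda>_. triple_pmf m r))"
    using set_Pi_pmf_subset'[of "{..<s}" "(0, 0, 0)" "\<lambda>_. triple_pmf m r"] assms(1)
    by (auto simp: checks_pmf_def)
  thus ?thesis using assms(2-4) set_pmf_triple by (auto simp: PiE_dflt_def)
qed

lemma check_pos_less:
  assumes "\<And>l. l < s \<Longrightarrow> w l \<in> {..<m} \<times> {..<r} \<times> {..<r}" "k < 2 * s"
  shows "check_pos m w k < m * r"
  using assms(1)[of "k div 2"] assms(2) block_pos_less
  by (auto simp: check_pos_def split: prod.splits)

section \<open>The tester for repeated strings\<close>

definition sample_strat :: "nat \<Rightarrow> nat \<Rightarrow> nat \<Rightarrow> (nat \<Rightarrow> nat) \<Rightarrow>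
    'a strategy \<Rightarrow> 'a strategy \<Rightarrow> 'a strategy \<Rightarrow> 'a strategy" where
  "sample_strat m r q \<beta> D1 D2 D3 = relabel m (m * r) \<beta> (cached_sim m (3 * q) (maj_strat m q D1 D2 D3) [] [])"

definition sample_accepts :: "nat \<Rightarrow> nat \<Rightarrow> 'a list \<Rightarrow> (nat \<Rightarrow> nat) \<Rightarrow>
    'a strategy \<Rightarrow> 'a strategy \<Rightarrow> 'a strategy \<Rightarrow> bool" where
  "sample_accepts m q x \<beta> D1 D2 D3 \<longleftrightarrow> maj3 (verdict q m D1 (block_sample m x \<beta>) [])
     (verdict q m D2 (block_sample m x \<beta>) []) (verdict q m D3 (block_sample m x \<beta>) [])"

definition rep_strat :: "nat \<Rightarrow> nat \<Rightarrow> nat \<Rightarrow> nat \<Rightarrow> (nat \<Rightarrow> nat \<times> nat \<times> nat) \<Rightarrow> (nat \<Rightarrow> nat) \<Rightarrow>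
    'a strategy \<Rightarrow> 'a strategy \<Rightarrow> 'a strategy \<Rightarrow> 'a strategy" where
  "rep_strat m r s q w \<beta> D1 D2 D3 = seq_strat (m * r) (2 * s) (check_strat m s w)
     (\<lambda>b. if b then sample_strat m r q \<beta> D1 D2 D3 else (\<lambda>_. Inr False)) []"

definition coins_pmf :: "nat \<Rightarrow> nat \<Rightarrow> nat \<Rightarrow> 'a strategy pmf \<Rightarrow>
   ((nat \<Rightarrow> nat \<times> nat \<times> nat) \<times> (nat \<Rightarrow> nat) \<times> 'a strategy \<times> 'a strategy \<times> 'a strategy) pmf" where
  "coins_pmf m r s T = pair_pmf (checks_pmf m r s) (pair_pmf (block_choice_pmf m r) (pair_pmf T (pair_pmf T T)))"

definition rep_tester :: "nat \<Rightarrow> nat \<Rightarrow> nat \<Rightarrow> nat \<Rightarrow> 'a strategy pmf \<Rightarrow> 'a strategy pmf" where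
  "rep_tester m r s q T = map_pmf (\<lambda>(w, \<beta>, D1, D2, D3). rep_strat m r s q w \<beta> D1 D2 D3) (coins_pmf m r s T)"

lemma run_on_sample_strat:
  assumes lx: "length x = m * r" and \<beta>: "\<And>v. \<beta> v < r" and k: "3 * q \<le> k"
  shows "run_on k (m * r) (sample_strat m r q \<beta> D1 D2 D3) x [] = Some (sample_accepts m q x \<beta> D1 D2 D3)"
    and "queries_on k (m * r) (sample_strat m r q \<beta> D1 D2 D3) x [] = map (\<lambda>v. \<beta> v * m + v)
      (queries_on k m (cached_sim m (3 * q) (maj_strat m q D1 D2 D3) [] []) (block_sample m x \<beta>) [])"
proof -
  let ?S = "cached_sim m (3 * q) (maj_strat m q D1 D2 D3) [] []"
  have relabel: "run_on k (m * r) (relabel m (m * r) \<beta> ?S) x [] = run_on k m ?S (block_sample m x \<beta>) [] \<and>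
      queries_on k (m * r) (relabel m (m * r) \<beta> ?S) x [] =
        map (\<lambda>v. \<beta> v * m + v) (queries_on k m ?S (block_sample m x \<beta>) [])"
    by (rule run_on_relabel) (use \<beta> block_pos_less in auto)
  have "run_on k m ?S (block_sample m x \<beta>) (map ((!) (block_sample m x \<beta>)) []) =
      run_on (3 * q) m (maj_strat m q D1 D2 D3) (block_sample m x \<beta>) []"
    by (rule run_on_cached_sim) (use k in simp_all)
  then show "run_on k (m * r) (sample_strat m r q \<beta> D1 D2 D3) x [] = Some (sample_accepts m q x \<beta> D1 D2 D3)"
    using relabel by (simp add: sample_strat_def sample_accepts_def run_on_maj_strat)
  show "queries_on k (m * r) (sample_strat m r q \<beta> D1 D2 D3) x [] = map (\<lambda>v. \<beta> v * m + v)
      (queries_on k m ?S (block_sample m x \<beta>) [])"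
    using relabel by (simp add: sample_strat_def)
qed

lemma run_on_rep_strat:
  assumes lx: "length x = m * r" and K: "2 * s + 3 * q \<le> K"
    and w: "\<And>l. l < s \<Longrightarrow> w l \<in> {..<m} \<times> {..<r} \<times> {..<r}" and \<beta>: "\<And>v. \<beta> v < r"
  defines "pass \<equiv> \<forall>l<s. w l \<in> consistent_triples x m"
  shows "run_on K (m * r) (rep_strat m r s q w \<beta> D1 D2 D3) x [] =
      Some (pass \<and> sample_accepts m q x \<beta> D1 D2 D3)"
    and "queries_on K (m * r) (rep_strat m r s q w \<beta> D1 D2 D3) x [] = check_queries m s w @
      (if pass then map (\<lambda>v. \<beta> v * m + v) (queries_on (K - 2 * s) m
         (cached_sim m (3 * q) (maj_strat m q D1 D2 D3) [] []) (block_sample m x \<beta>) []) else [])"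
proof -
  define k where "k = K - 2 * s"
  have K_eq: "K = 2 * s + k" and kq: "3 * q \<le> k" using K by (simp_all add: k_def)
  let ?cont = "\<lambda>b. if b then sample_strat m r q \<beta> D1 D2 D3 else (\<lambda>_. Inr False :: nat + bool)"
  have check: "verdict (2 * s) (m * r) (check_strat m s w) x [] = pass \<and>
      queries_on (2 * s) (m * r) (check_strat m s w) x [] = check_queries m s w"
    unfolding pass_def by (rule run_on_check_strat) (use check_pos_less w in blast)
  have sample_run: "run_on k (m * r) (?cont pass) x [] = Some (pass \<and> sample_accepts m q x \<beta> D1 D2 D3)"
    using run_on_sample_strat(1)[OF lx \<beta> kq] by (cases k) auto
  show "run_on K (m * r) (rep_strat m r s q w \<beta> D1 D2 D3) x [] =
      Some (pass \<and> sample_accepts m q x \<beta> D1 D2 D3)"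
    unfolding rep_strat_def K_eq by (rule run_on_seq_strat) (use check sample_run in simp)
  have "queries_on k (m * r) (?cont pass) x [] =
      (if pass then map (\<lambda>v. \<beta> v * m + v) (queries_on k m
         (cached_sim m (3 * q) (maj_strat m q D1 D2 D3) [] []) (block_sample m x \<beta>) []) else [])"
    using run_on_sample_strat(2)[OF lx \<beta> kq] by (cases k) auto
  then show "queries_on K (m * r) (rep_strat m r s q w \<beta> D1 D2 D3) x [] = check_queries m s w @
      (if pass then map (\<lambda>v. \<beta> v * m + v) (queries_on (K - 2 * s) m
         (cached_sim m (3 * q) (maj_strat m q D1 D2 D3) [] []) (block_sample m x \<beta>) []) else [])"
    unfolding rep_strat_def K_eq queries_on_seq_strat using check by simp
qed

lemma coins_pmf_support:
  assumes "(w, \<beta>, D1, D2, D3) \<in> set_pmf (coins_pmf m r s T)" "0 < r" "0 < m"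
  shows "\<And>l. l < s \<Longrightarrow> w l \<in> {..<m} \<times> {..<r} \<times> {..<r}" and "\<And>v. \<beta> v < r"
  using assms checks_pmf_support block_choice_support by (fastforce simp: coins_pmf_def)+

lemma prob_rep_tester:
  "measure_pmf.prob (rep_tester m r s q T) {S. Q S} =
    measure_pmf.prob (coins_pmf m r s T) {(w, \<beta>, D1, D2, D3). Q (rep_strat m r s q w \<beta> D1 D2 D3)}"
  unfolding rep_tester_def by (simp add: vimage_def case_prod_unfold)

lemma spread_rep_tester:
  assumes r: "0 < r" and m: "0 < m" and lx: "length x = m * r" and K: "2 * s + 3 * q \<le> K"
  shows "spread r (map_pmf (\<lambda>S. queries_on K (m * r) S x []) (rep_tester m r s q T))"
proof -
  define sample_queries where "sample_queries w = (\<lambda>(\<beta>, D1, D2, D3).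
      if \<forall>l<s. w l \<in> consistent_triples x m then map (\<lambda>v. \<beta> v * m + v) (queries_on (K - 2 * s) m
        (cached_sim m (3 * q) (maj_strat m q D1 D2 D3) [] []) (block_sample m x \<beta>) []) else [])"
    for w
  have "map_pmf (\<lambda>S. queries_on K (m * r) S x []) (rep_tester m r s q T) =
      map_pmf (\<lambda>(w, bd). check_queries m s w @ sample_queries w bd) (coins_pmf m r s T)"
    unfolding rep_tester_def pmf.map_comp
  proof (rule pmf.map_cong[OF refl])
    fix om assume om: "om \<in> set_pmf (coins_pmf m r s T)"
    obtain w \<beta> D1 D2 D3 where om_eq: "om = (w, \<beta>, D1, D2, D3)" by (cases om) auto
    show "((\<lambda>S. queries_on K (m * r) S x []) \<circ>
        (\<lambda>(w, \<beta>, D1, D2, D3). rep_strat m r s q w \<beta> D1 D2 D3)) om =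
      (\<lambda>(w, bd). check_queries m s w @ sample_queries w bd) om"
      using run_on_rep_strat(2)[OF lx K coins_pmf_support[OF om[unfolded om_eq] r m]]
      by (simp add: om_eq sample_queries_def)
  qed
  also have "spread r \<dots>"
    unfolding coins_pmf_def
  proof (rule spread_append[where ll = "2 * s"])
    fix w
    show "spread r (map_pmf (sample_queries w) (pair_pmf (block_choice_pmf m r) (pair_pmf T (pair_pmf T T))))"
    proof (cases "\<forall>l<s. w l \<in> consistent_triples x m")
      case True
      show ?thesis unfolding map_pair_pmf_eq_bind_snd
        by (intro spread_bind)
           (use spread_cached_sim[OF r m, of "[]" "[]"] True in
             \<open>auto simp: sample_queries_def block_choice_pmf_def\<close>)
    qed (rule spread_map_Nil, auto simp: sample_queries_def)
  qed (simp_all add: spread_check_queries[OF r m])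
  finally show ?thesis .
qed

lemma prob_verdict_ge_std:
  "measure_pmf.prob T {D. run q m D (\<lambda>_. z) [] [] = Some b} \<le> measure_pmf.prob T {D. verdict q m D z [] = b}"
  by (rule measure_pmf.finite_measure_mono) (auto simp: verdict_def run_const_oracle)

lemma prob_rep_tester_accept:
  assumes r: "0 < r" and m: "0 < m" and lx: "length x = m * r" and K: "2 * s + 3 * q \<le> K"
    and std: "std_tester P \<epsilon> m q T" and x: "x \<in> rep_prop r P"
  shows "measure_pmf.prob (rep_tester m r s q T) {S. run_on K (m * r) S x [] = Some True} \<ge> 20 / 27"
proof -
  obtain p where p: "p \<in> P" and xp: "x = rep r p" using x by (auto simp: rep_prop_def rep_def)
  have lp: "length p = m" using lx xp r by simp
  have x_nth: "x ! (j * m + i) = p ! i" if "j < r" "i < m" for j i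
    using rep_nth[of i p j r] that lp xp by simp
  define E where "E = {D. verdict q m D p []}"
  define Maj where "Maj = {(D1, D2, D3). maj3 (D1 \<in> E) (D2 \<in> E) (D3 \<in> E)}"
  have "2 / 3 \<le> measure_pmf.prob T E"
    using std p lp prob_verdict_ge_std[of T q m p True] by (auto simp: std_tester_def E_def)
  then have "20 / 27 \<le> measure_pmf.prob (pair_pmf T (pair_pmf T T)) Maj"
    unfolding Maj_def by (rule prob_maj3_ge)
  also have "\<dots> = measure_pmf.prob (pair_pmf (block_choice_pmf m r) (pair_pmf T (pair_pmf T T)))
      {bd. snd bd \<in> Maj}"
    by (rule prob_pair_snd[symmetric])
  also have "\<dots> = measure_pmf.prob (coins_pmf m r s T) {om. snd om \<in> {bd. snd bd \<in> Maj}}"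
    unfolding coins_pmf_def by (rule prob_pair_snd[symmetric])
  also have "\<dots> \<le> measure_pmf.prob (rep_tester m r s q T) {S. run_on K (m * r) S x [] = Some True}"
    unfolding prob_rep_tester
  proof (rule prob_mono_on_support)
    fix om assume om: "om \<in> set_pmf (coins_pmf m r s T)" and maj: "om \<in> {om. snd om \<in> {bd. snd bd \<in> Maj}}"
    obtain w \<beta> D1 D2 D3 where om_eq: "om = (w, \<beta>, D1, D2, D3)" by (cases om) auto
    note support = coins_pmf_support[OF om[unfolded om_eq] r m]
    have "\<forall>l<s. w l \<in> consistent_triples x m"
      using support(1) x_nth by (fastforce simp: consistent_triples_def)
    moreover have "block_sample m x \<beta> = p"
      using support(2) x_nth lp by (auto simp: block_sample_def intro: nth_equalityI)
    ultimately show "om \<in> {(w, \<beta>, D1, D2, D3). run_on K (m * r) (rep_strat m r s q w \<beta> D1 D2 D3) x [] = Some True}"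
      using run_on_rep_strat(1)[OF lx K support] maj by (simp add: om_eq sample_accepts_def Maj_def E_def)
  qed
  finally show ?thesis .
qed

lemma prob_sample_accepts_le:
  assumes std: "std_tester P (\<epsilon> / 2) m q T" and far: "far \<epsilon> (rep_prop r P) x"
    and lx: "length x = m * r" and r: "0 < r"
  shows "measure_pmf.prob (pair_pmf (block_choice_pmf m r) (pair_pmf T (pair_pmf T T)))
      {(\<beta>, D1, D2, D3). sample_accepts m q x \<beta> D1 D2 D3} \<le>
    measure_pmf.prob (block_choice_pmf m r) {\<beta>. \<epsilon> / 2 \<le> hdist x (rep r (block_sample m x \<beta>))} + 7 / 27"
proof (rule prob_pair_le_add)
  fix \<beta> assume "\<beta> \<notin> {\<beta>. \<epsilon> / 2 \<le> hdist x (rep r (block_sample m x \<beta>))}"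
  let ?z = "block_sample m x \<beta>"
  have close: "hdist x (rep r ?z) < \<epsilon> / 2" using \<open>\<beta> \<notin> _\<close> by simp
  let ?E = "{D. verdict q m D ?z [] = False}"
  have "far (\<epsilon> / 2) P ?z"
    unfolding far_def
  proof (intro ballI impI)
    fix p assume p: "p \<in> P" "length p = length ?z"
    show "\<epsilon> / 2 \<le> hdist ?z p"
    proof (rule ccontr)
      assume "\<not> \<epsilon> / 2 \<le> hdist ?z p"
      then have "\<epsilon> / 2 < hdist x (rep r ?z)"
        using hdist_rep_gt_if_far[OF far _ r p(1), of m ?z] lx p(2) by (simp add: mult.commute)
      then show False using close by simp
    qed
  qed
  then have "2 / 3 \<le> measure_pmf.prob T {D. run q m D (\<lambda>_. ?z) [] [] = Some False}"
    using std by (simp add: std_tester_def)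
  then have "2 / 3 \<le> measure_pmf.prob T {D. verdict q m D ?z [] = False}"
    using prob_verdict_ge_std[of T q m ?z False] by linarith
  then have "20 / 27 \<le> measure_pmf.prob (pair_pmf T (pair_pmf T T))
      {(D1, D2, D3). maj3 (D1 \<in> ?E) (D2 \<in> ?E) (D3 \<in> ?E)}"
    by (rule prob_maj3_ge)
  moreover have "{Ds. (\<beta>, Ds) \<in> {(\<beta>, D1, D2, D3). sample_accepts m q x \<beta> D1 D2 D3}} =
      - {(D1, D2, D3). maj3 (D1 \<in> ?E) (D2 \<in> ?E) (D3 \<in> ?E)}"
    by (auto simp: sample_accepts_def maj3_def)
  ultimately show "measure_pmf.prob (pair_pmf T (pair_pmf T T))
      {Ds. (\<beta>, Ds) \<in> {(\<beta>, D1, D2, D3). sample_accepts m q x \<beta> D1 D2 D3}} \<le> 7 / 27"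
    by (simp add: prob_pmf_compl)
qed simp

text \<open>Either a single check rejects with probability \<open>D \<ge> \<epsilon>/40\<close>, and then one of the \<open>s \<ge> 120/\<epsilon>\<close>
  checks rejects with probability \<open>3/4\<close>, or \<open>D < \<epsilon>/40\<close>, and then the majority of the three runs on
  \<open>z\<^sub>\<beta>\<close> accepts with probability at most \<open>1/20 + 7/27\<close>.\<close>

lemma one_minus_power_mult_le:
  fixes D g \<epsilon> :: real
  assumes D: "0 \<le> D" "D \<le> 1" and g: "0 \<le> g" "g \<le> 1" and eps: "0 < \<epsilon>"
    and s: "120 / \<epsilon> \<le> real s" and g_le: "g \<le> D / (\<epsilon> / 2) + 7 / 27"
  shows "(1 - D) ^ s * g \<le> 17 / 54"
proof -
  have pow: "0 \<le> (1 - D) ^ s" "(1 - D) ^ s \<le> 1" using D by (simp_all add: power_le_one)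
  show ?thesis
  proof (cases "D \<ge> \<epsilon> / 40")
    case True
    have "real s * D \<ge> (120 / \<epsilon>) * (\<epsilon> / 40)" using True s eps by (intro mult_mono) auto
    hence "real s * D \<ge> 3" using eps by simp
    hence "1 / (1 + real s * D) \<le> 1 / 4" by (intro divide_left_mono) auto
    hence "(1 - D) ^ s \<le> 1 / 4" using one_minus_power_le_inverse[OF D, of s] by linarith
    then have "(1 - D) ^ s * g \<le> 1 / 4 * 1" using g pow by (intro mult_mono) auto
    then show ?thesis by simp
  next
    case False
    have "D / (\<epsilon> / 2) \<le> 1 / 20" using False eps by (simp add: field_simps)
    moreover have "(1 - D) ^ s * g \<le> g" using g pow by (intro mult_left_le_one_le) auto
    ultimately show ?thesis using g_le by linarith
  qed
qed

lemma prob_rep_tester_reject: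
  assumes r: "0 < r" and m: "0 < m" and lx: "length x = m * r" and K: "2 * s + 3 * q \<le> K"
    and std: "std_tester P (\<epsilon> / 2) m q T" and far: "far \<epsilon> (rep_prop r P) x"
    and eps: "0 < \<epsilon>" and s: "120 / \<epsilon> \<le> real s"
  shows "measure_pmf.prob (rep_tester m r s q T) {S. run_on K (m * r) S x [] = Some False} \<ge> 37 / 54"
proof -
  define Pass where "Pass = {w. \<forall>l<s. w l \<in> consistent_triples x m}"
  define Acc where "Acc = {(\<beta>, D1, D2, D3). sample_accepts m q x \<beta> D1 D2 D3}"
  define D where "D = measure_pmf.prob (triple_pmf m r) (- consistent_triples x m)"
  define g where "g = measure_pmf.prob (pair_pmf (block_choice_pmf m r) (pair_pmf T (pair_pmf T T))) Acc"
  have "- consistent_triples x m = {(i, j, c). x ! (j * m + i) \<noteq> x ! (c * m + i)}"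
    by (auto simp: consistent_triples_def)
  then have D_eq: "D = real (mismatch_count x m r) / (real r * real m * real r)"
    using prob_triple_mismatch[OF r m, of x] by (simp add: D_def)
  have "g \<le> D / (\<epsilon> / 2) + 7 / 27"
    using prob_sample_accepts_le[OF std far lx r] prob_hdist_block_sample_ge[of r x m "\<epsilon> / 2"] r lx eps
    by (simp add: g_def Acc_def D_eq mult.commute)
  then have "(1 - D) ^ s * g \<le> 17 / 54"
    by (intro one_minus_power_mult_le[OF _ _ _ _ eps s]) (simp_all add: D_def g_def)
  moreover have "measure_pmf.prob (coins_pmf m r s T) (- (Pass \<times> Acc)) = 1 - (1 - D) ^ s * g"
    by (simp add: prob_pmf_compl coins_pmf_def prob_pair_Times Pass_def checks_pmf_def
        prob_Pi_pmf_all D_def g_def)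
  moreover have "measure_pmf.prob (coins_pmf m r s T) (- (Pass \<times> Acc)) \<le>
      measure_pmf.prob (rep_tester m r s q T) {S. run_on K (m * r) S x [] = Some False}"
    unfolding prob_rep_tester
  proof (rule prob_mono_on_support)
    fix om assume om: "om \<in> set_pmf (coins_pmf m r s T)" and "om \<in> - (Pass \<times> Acc)"
    moreover obtain w \<beta> D1 D2 D3 where om_eq: "om = (w, \<beta>, D1, D2, D3)" by (cases om) auto
    ultimately show "om \<in> {(w, \<beta>, D1, D2, D3). run_on K (m * r) (rep_strat m r s q w \<beta> D1 D2 D3) x [] = Some False}"
      using run_on_rep_strat(1)[OF lx K coins_pmf_support[OF om[unfolded om_eq] r m]]
      by (auto simp: om_eq Pass_def Acc_def)
  qed
  ultimately show ?thesis by linarith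
qed

lemma oc_tester_rep_tester:
  fixes T :: "'a strategy pmf"
  assumes r: "0 < r" and m: "0 < m" and K: "2 * s + 3 * q \<le> K"
    and std: "std_tester P (\<epsilon> / 2) m q T" and eps: "0 < \<epsilon>" and s: "120 / \<epsilon> \<le> real s"
    and corruption: "real (K * K * t) / real r \<le> 1 / 54"
  shows "oc_tester (rep_prop r P) \<epsilon> t (m * r) K (rep_tester m r s q T)"
  unfolding oc_tester_def
proof (intro allI impI conjI)
  fix x :: "'a list" and orc assume lx: "length x = m * r" and oc: "oc_oracle t x orc"
  have corrupted: "measure_pmf.prob (rep_tester m r s q T) {S. run K (m * r) S orc [] [] = Some v} \<ge>
      measure_pmf.prob (rep_tester m r s q T) {S. run_on K (m * r) S x [] = Some v} - 1 / 54" for v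
    using prob_oc_run_ge[OF oc lx r spread_rep_tester[OF r m lx K, where T=T], where v=v] corruption
    by linarith
  show "2 / 3 \<le> measure_pmf.prob (rep_tester m r s q T) {S. run K (m * r) S orc [] [] = Some True}"
    if "x \<in> rep_prop r P"
    using corrupted[of True] prob_rep_tester_accept[OF r m lx K std that] by linarith
  show "2 / 3 \<le> measure_pmf.prob (rep_tester m r s q T) {S. run K (m * r) S orc [] [] = Some False}"
    if "far \<epsilon> (rep_prop r P) x"
    using corrupted[of False] prob_rep_tester_reject[OF r m lx K std that eps s] by linarith
qed

lemma oc_tester_empty_input:
  assumes "0 < \<epsilon>"
  shows "oc_tester P \<epsilon> t 0 K (return_pmf (\<lambda>_. Inr ([] \<in> P)))"
  unfolding oc_tester_def
proof (intro allI impI conjI)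
  fix x :: "'a list" and orc assume "length x = 0"
  then have x: "x = []" by simp
  have run: "run K 0 (\<lambda>_. Inr ([] \<in> P)) orc [] [] = Some ([] \<in> P)" by (cases K) simp_all
  show "x \<in> P \<Longrightarrow> 2 / 3 \<le> measure_pmf.prob (return_pmf (\<lambda>_. Inr ([] \<in> P)))
      {D. run K 0 D orc [] [] = Some True}"
    using run x by simp
  show "far \<epsilon> P x \<Longrightarrow> 2 / 3 \<le> measure_pmf.prob (return_pmf (\<lambda>_. Inr ([] \<in> P)))
      {D. run K 0 D orc [] [] = Some False}"
    using run x assms by (auto simp: far_def hdist_self)
qed

section \<open>Choice of the parameters\<close>

lemma mult_square_le_of_le_div_square_log:
  fixes q t :: nat and a :: real
  assumes t: "real t \<le> a / (real q * log 2 (real q))\<^sup>2" and a: "0 \<le> a"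
  shows "real t * (real q)\<^sup>2 \<le> a"
proof (cases "t = 0")
  case False
  have q2: "2 \<le> real q"
  proof (rule ccontr)
    assume "\<not> 2 \<le> real q"
    then have "q = 0 \<or> q = 1" by linarith
    then have "real t \<le> 0" using t by auto
    then show False using False by simp
  qed
  have log: "1 \<le> log 2 (real q)" using q2 by simp
  then have "real q \<le> real q * log 2 (real q)" using mult_left_mono[OF log, of "real q"] by simp
  then have square: "(real q)\<^sup>2 \<le> (real q * log 2 (real q))\<^sup>2" by (intro power_mono) auto
  have "0 < real q * log 2 (real q)" using q2 log by (intro mult_pos_pos) auto
  then have "0 < (real q * log 2 (real q))\<^sup>2" by (rule zero_less_power)
  then have "real t * (real q * log 2 (real q))\<^sup>2 \<le> a" using t by (simp add: pos_le_divide_eq)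
  moreover have "real t * (real q)\<^sup>2 \<le> real t * (real q * log 2 (real q))\<^sup>2"
    using square by (simp add: mult_left_mono)
  ultimately show ?thesis by linarith
qed (simp add: a)

lemma rep_tester_query_budget:
  assumes c: "0 < c" and eps: "0 < \<epsilon>" and q: "2 * c / \<epsilon> \<le> real q"
  shows "2 * nat \<lceil>120 / \<epsilon>\<rceil> + 3 * q \<le> nat \<lfloor>(120 / c + 5) * real q\<rfloor>"
proof -
  have "0 < 2 * c / \<epsilon>" using c eps by simp
  then have "0 < q" using q by linarith
  then have q1: "1 \<le> real q" by simp
  have "2 / \<epsilon> \<le> real q / c" using q c by (simp add: field_simps)
  have "real (2 * nat \<lceil>120 / \<epsilon>\<rceil> + 3 * q) \<le> 120 * (2 / \<epsilon>) + 2 + 3 * real q"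
    using eps by simp linarith
  also have "\<dots> \<le> 120 * (real q / c) + 2 * real q + 3 * real q"
    using \<open>2 / \<epsilon> \<le> real q / c\<close> q1 by linarith
  also have "\<dots> = (120 / c + 5) * real q" by (simp add: field_simps)
  finally show ?thesis by (intro le_nat_floor) simp
qed

lemma rep_tester_corruption_budget:
  assumes r: "0 < r" and C: "0 < C" and K: "real K \<le> C * real q"
    and \<delta>: "0 \<le> \<delta>" "\<delta> \<le> 1 / (54 * C\<^sup>2)" and t: "real t \<le> \<delta> * real r / (real q * log 2 (real q))\<^sup>2"
  shows "real (K * K * t) / real r \<le> 1 / 54"
proof -
  have tq: "real t * (real q)\<^sup>2 \<le> \<delta> * real r"
    by (rule mult_square_le_of_le_div_square_log[OF t]) (use \<delta> in simp)
  have "real (K * K * t) \<le> (C * real q) * (C * real q) * real t"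
    using K by (simp add: mult_mono)
  also have "\<dots> = C\<^sup>2 * (real t * (real q)\<^sup>2)" by (simp add: power2_eq_square algebra_simps)
  also have "\<dots> \<le> C\<^sup>2 * (\<delta> * real r)" using tq by (intro mult_left_mono) auto
  also have "\<dots> \<le> C\<^sup>2 * (1 / (54 * C\<^sup>2) * real r)" using \<delta> by (intro mult_left_mono mult_right_mono) auto
  also have "\<dots> = real r / 54" using C by simp
  finally show ?thesis using r by (simp add: divide_le_eq)
qed

lemma oc_testable_rep_prop:
  fixes P :: "'a list set"
  assumes testable: "\<exists>T. std_tester P (\<epsilon> / 2) m q T" and c: "0 < c" and q: "2 * c / \<epsilon> \<le> real q"
    and eps: "0 < \<epsilon>" and \<delta>: "0 \<le> \<delta>" "\<delta> \<le> 1 / (54 * (120 / c + 5)\<^sup>2)"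
    and t: "real t \<le> \<delta> * real r / (real q * log 2 (real q))\<^sup>2"
  shows "\<exists>T. oc_tester (rep_prop r P) \<epsilon> t (m * r) (nat \<lfloor>(120 / c + 5) * real q\<rfloor>) T"
proof (cases "m * r = 0")
  case True
  then show ?thesis by (simp only:) (rule exI, rule oc_tester_empty_input[OF eps])
next
  case False
  then have r: "0 < r" and m: "0 < m" by auto
  obtain T where std: "std_tester P (\<epsilon> / 2) m q T" using testable by blast
  define C where "C = 120 / c + 5"
  have C: "0 < C" using c by (simp add: C_def add_pos_pos)
  have "real (nat \<lfloor>C * real q\<rfloor>) \<le> C * real q" using C by simp
  then have corruption: "real (nat \<lfloor>C * real q\<rfloor> * nat \<lfloor>C * real q\<rfloor> * t) / real r \<le> 1 / 54"
    by (rule rep_tester_corruption_budget[OF r C _ \<delta>(1) _ t]) (use \<delta>(2) in \<open>simp add: C_def\<close>)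
  have s: "120 / \<epsilon> \<le> real (nat \<lceil>120 / \<epsilon>\<rceil>)" by linarith
  have "oc_tester (rep_prop r P) \<epsilon> t (m * r) (nat \<lfloor>C * real q\<rfloor>) (rep_tester m r (nat \<lceil>120 / \<epsilon>\<rceil>) q T)"
    by (rule oc_tester_rep_tester[OF r m _ std eps s corruption])
       (use rep_tester_query_budget[OF c eps q] in \<open>simp add: C_def\<close>)
  then show ?thesis unfolding C_def by blast
qed

theorem lemma3p5:
  fixes P :: "('a::finite) list set" and q :: "nat \<Rightarrow> real \<Rightarrow> nat"
  assumes testable: "\<forall>\<epsilon>. 0 < \<epsilon> \<and> \<epsilon> < 1 \<longrightarrow> (\<forall>m. \<exists>T. std_tester P \<epsilon> m (q m \<epsilon>) T)"
    and omega: "\<exists>c>0. \<forall>m \<epsilon>. 0 < \<epsilon> \<and> \<epsilon> < 1 \<longrightarrow> real (q m \<epsilon>) \<ge> c / \<epsilon>"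
  shows "\<exists>\<delta>0>0. \<forall>\<delta>. 0 < \<delta> \<and> \<delta> < \<delta>0 \<longrightarrow>
    (\<exists>C>0. \<exists>k::nat. \<forall>\<epsilon> m r t. 0 < \<epsilon> \<and> \<epsilon> < 1 \<longrightarrow>
       real t \<le> \<delta> * real r / (real (q m (\<epsilon>/2)) * log 2 (real (q m (\<epsilon>/2))))\<^sup>2 \<longrightarrow>
       (\<exists>T. oc_tester (rep_prop r P) \<epsilon> t (m * r)
              (nat \<lfloor>C * real (q m (\<epsilon>/2)) * (log 2 (real (q m (\<epsilon>/2)) + 2)) ^ k\<rfloor>) T))"
proof -
  obtain c where c: "c > 0" and q_ge: "\<And>m \<epsilon>. 0 < \<epsilon> \<Longrightarrow> \<epsilon> < 1 \<Longrightarrow> real (q m \<epsilon>) \<ge> c / \<epsilon>"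
    using omega by blast
  define \<delta>0 where "\<delta>0 = 1 / (54 * (120 / c + 5)\<^sup>2)"
  have C: "120 / c + 5 > 0" using c by (simp add: add_pos_pos)
  then have \<delta>0: "\<delta>0 > 0" by (simp add: \<delta>0_def)
  have main: "\<exists>T. oc_tester (rep_prop r P) \<epsilon> t (m * r)
      (nat \<lfloor>(120 / c + 5) * real (q m (\<epsilon>/2)) * (log 2 (real (q m (\<epsilon>/2)) + 2)) ^ 0\<rfloor>) T"
    if "0 < \<delta>" "\<delta> < \<delta>0" "0 < \<epsilon>" "\<epsilon> < 1"
      and t: "real t \<le> \<delta> * real r / (real (q m (\<epsilon>/2)) * log 2 (real (q m (\<epsilon>/2))))\<^sup>2" for \<delta> \<epsilon> m r t
  proof -
    have "\<exists>T. std_tester P (\<epsilon> / 2) m (q m (\<epsilon> / 2)) T"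
      using testable that(3,4) by simp
    moreover have "2 * c / \<epsilon> \<le> real (q m (\<epsilon> / 2))"
      using q_ge[of "\<epsilon> / 2" m] that(3,4) by (simp add: mult.commute[of c 2])
    moreover have "\<delta> \<le> 1 / (54 * (120 / c + 5)\<^sup>2)" using that(2) by (simp add: \<delta>0_def)
    ultimately show ?thesis
      using oc_testable_rep_prop[OF _ c _ that(3) _ _ t] that(1) by simp
  qed
  show ?thesis
    apply (rule exI[of _ \<delta>0], intro conjI allI impI \<delta>0)
    apply (rule exI[of _ "120 / c + 5"], intro conjI C)
    apply (rule exI[of _ "0::nat"], intro allI impI)
    by (rule main) auto
qed

end
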